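(* Let $(\alpha_1,\alpha_2)\in\mathbb{C}^2$ and $p_1,p_2\in\mathbb{C}[u]\setminus\{0\}$ satisfy $p_1(u+\alpha_2/2)p_2(u+\alpha_1/2)=p_1(u-\alpha_2/2)p_2(u-\alpha_1/2)$. Then the noncommutative Kleinian fiber product $\mathcal{A}_{\alpha_1,\alpha_2}(p_1,p_2)$ is isomorphic to the twisted generalized Weyl algebra $\mathcal{A}(R,\boldsymbol{\sigma},\boldsymbol{t})$ with $R=\mathbb{C}[u]$, $\boldsymbol{\sigma}=(\sigma_1,\sigma_2)$ where $\sigma_i(u)=u-\alpha_i$, and $\boldsymbol{t}=(p_1,p_2)$.
   Context: Noncommutative Kleinian fiber product: $\tilde{\mathcal{A}}_{\alpha_1,\alpha_2}(p_1,p_2)$ is generated by $H,X_1^\pm,X_2^\pm$ with relations ($i=1,2$) $HX_i^\pm-X_i^\pm H=\pm\alpha_iX_i^\pm$, $X_i^+X_i^-=p_i(H-\alpha_i/2)$, $X_i^-X_i^+=p_i(H+\alpha_i/2)$, $X_1^+X_2^-=X_2^-X_1^+$, $X_1^-X_2^+=X_2^+X_1^-$; $\mathcal{A}_{\alpha_1,\alpha_2}(p_1,p_2)$ is its quotient by the ideal of all $a$ with $f(H)a=0$ for some nonzero polynomial $f$. TGWA: for a commutative-or-not unital $\mathbb{C}$-algebra $R$, commuting automorphisms $\sigma_i^{1/2}$ ($\sigma_i=(\sigma_i^{1/2})^2$) and central $t_i$, $\tilde{\mathcal{A}}(R,\boldsymbol{\sigma},\boldsymbol{t})$ is obtained from $R$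 by adjoining $X_i^\pm$ with $X_i^\pm r=\sigma_i^{\pm1}(r)X_i^\pm$, $X_i^\pm X_i^\mp=\sigma_i^{\pm1/2}(t_i)$, $[X_i^\pm,X_j^\mp]=0$ ($i\neq j$), graded by $\deg r=0$, $\deg X_i^\pm=\pm\mathbf{e}_i$; $\mathcal{A}(R,\boldsymbol{\sigma},\boldsymbol{t})$ is its quotient by the sum of all graded ideals intersecting $R$ trivially. Here $\sigma_i^{1/2}(u)=u-\alpha_i/2$. *)

theory Defs
  imports "HOL-Algebra.QuotRing" "HOL-Computational_Algebra.Polynomial"
begin

text \<open>Elements: finitely supported functions from words (lists of generators) to complex
  numbers; product is concatenation-convolution.\<close>

definition fa_mult :: "('g list \<Rightarrow> complex) \<Rightarrow> ('g list \<Rightarrow> complex) \<Rightarrow> 'g list \<Rightarrow> complex" where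
  "fa_mult f g = (\<lambda>w. \<Sum>k\<le>length w. f (take k w) * g (drop k w))"

definition fa_const :: "complex \<Rightarrow> 'g list \<Rightarrow> complex" where
  "fa_const c = (\<lambda>w. if w = [] then c else 0)"

definition fa_gen :: "'g \<Rightarrow> 'g list \<Rightarrow> complex" where
  "fa_gen x = (\<lambda>w. if w = [x] then 1 else 0)"

definition fa_add :: "('g list \<Rightarrow> complex) \<Rightarrow> ('g list \<Rightarrow> complex) \<Rightarrow> 'g list \<Rightarrow> complex" where
  "fa_add f g = (\<lambda>w. f w + g w)"

definition fa_smult :: "complex \<Rightarrow> ('g list \<Rightarrow> complex) \<Rightarrow> 'g list \<Rightarrow> complex" where
  "fa_smult c f = (\<lambda>w. c * f w)"

definition fa_sub :: "('g list \<Rightarrow> complex) \<Rightarrow> ('g list \<Rightarrow> complex) \<Rightarrow> 'g list \<Rightarrow> complex" where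
  "fa_sub f g = (\<lambda>w. f w - g w)"

primrec fa_pow :: "('g list \<Rightarrow> complex) \<Rightarrow> nat \<Rightarrow> 'g list \<Rightarrow> complex" where
  "fa_pow x 0 = fa_const 1"
| "fa_pow x (Suc n) = fa_mult (fa_pow x n) x"

definition fa_poly :: "complex poly \<Rightarrow> ('g list \<Rightarrow> complex) \<Rightarrow> 'g list \<Rightarrow> complex" where
  "fa_poly p x = (\<lambda>w. \<Sum>k\<le>degree p. coeff p k * fa_pow x k w)"

definition free_alg :: "('g list \<Rightarrow> complex) ring" where
  "free_alg = \<lparr>carrier = {f. finite {w. f w \<noteq> 0}}, monoid.mult = fa_mult, one = fa_const 1,
               zero = (\<lambda>_. 0), add = fa_add\<rparr>"

datatype idx = I1 | I2

text \<open>\<open>G0\<close> is \<open>H\<close> (fiber product) resp. \<open>u\<close> (TGWA over C[u]); \<open>XP i\<close>, \<open>XM i\<close> are \<open>X_i^+\<close>, \<open>X_i^-\<close>.\<close>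
datatype gen = G0 | XP idx | XM idx

abbreviation "gH \<equiv> (fa_gen G0 :: gen list \<Rightarrow> complex)"
abbreviation "gXP i \<equiv> (fa_gen (XP i) :: gen list \<Rightarrow> complex)"
abbreviation "gXM i \<equiv> (fa_gen (XM i) :: gen list \<Rightarrow> complex)"

definition shift :: "complex \<Rightarrow> complex poly \<Rightarrow> complex poly" where
  "shift c r = pcompose r [:c, 1:]"

definition kfp_rels :: "(idx \<Rightarrow> complex) \<Rightarrow> (idx \<Rightarrow> complex poly) \<Rightarrow> (gen list \<Rightarrow> complex) set" where
  "kfp_rels \<alpha> p =
     (\<Union>i. { fa_sub (fa_sub (fa_mult gH (gXP i)) (fa_mult (gXP i) gH)) (fa_smult (\<alpha> i) (gXP i)),
             fa_sub (fa_sub (fa_mult gH (gXM i)) (fa_mult (gXM i) gH)) (fa_smult (- \<alpha> i) (gXM i)),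
             fa_sub (fa_mult (gXP i) (gXM i)) (fa_poly (p i) (fa_sub gH (fa_const (\<alpha> i / 2)))),
             fa_sub (fa_mult (gXM i) (gXP i)) (fa_poly (p i) (fa_add gH (fa_const (\<alpha> i / 2)))) })
     \<union> { fa_sub (fa_mult (gXP I1) (gXM I2)) (fa_mult (gXM I2) (gXP I1)),
         fa_sub (fa_mult (gXM I1) (gXP I2)) (fa_mult (gXP I2) (gXM I1)) }"

definition kfp_tilde_ideal :: "(idx \<Rightarrow> complex) \<Rightarrow> (idx \<Rightarrow> complex poly) \<Rightarrow> (gen list \<Rightarrow> complex) set" where
  "kfp_tilde_ideal \<alpha> p = genideal free_alg (kfp_rels \<alpha> p)"

definition kfp_torsion :: "(idx \<Rightarrow> complex) \<Rightarrow> (idx \<Rightarrow> complex poly) \<Rightarrow> (gen list \<Rightarrow> complex) set" where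
  "kfp_torsion \<alpha> p = {x \<in> carrier free_alg. \<exists>f. f \<noteq> 0 \<and> fa_mult (fa_poly f gH) x \<in> kfp_tilde_ideal \<alpha> p}"

definition kfp_ideal :: "(idx \<Rightarrow> complex) \<Rightarrow> (idx \<Rightarrow> complex poly) \<Rightarrow> (gen list \<Rightarrow> complex) set" where
  "kfp_ideal \<alpha> p = genideal free_alg (kfp_tilde_ideal \<alpha> p \<union> kfp_torsion \<alpha> p)"

definition KFP :: "(idx \<Rightarrow> complex) \<Rightarrow> (idx \<Rightarrow> complex poly) \<Rightarrow> (gen list \<Rightarrow> complex) set ring" where
  "KFP \<alpha> p = free_alg Quot kfp_ideal \<alpha> p"

definition tgwa_rels :: "(idx \<Rightarrow> complex) \<Rightarrow> (idx \<Rightarrow> complex poly) \<Rightarrow> (gen list \<Rightarrow> complex) set" where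
  "tgwa_rels \<alpha> t =
     (\<Union>i. \<Union>r. { fa_sub (fa_mult (gXP i) (fa_poly r gH)) (fa_mult (fa_poly (shift (- \<alpha> i) r) gH) (gXP i)),
                 fa_sub (fa_mult (gXM i) (fa_poly r gH)) (fa_mult (fa_poly (shift (\<alpha> i) r) gH) (gXM i)) })
     \<union> (\<Union>i. { fa_sub (fa_mult (gXP i) (gXM i)) (fa_poly (shift (- \<alpha> i / 2) (t i)) gH),
              fa_sub (fa_mult (gXM i) (gXP i)) (fa_poly (shift (\<alpha> i / 2) (t i)) gH) })
     \<union> { fa_sub (fa_mult (gXP I1) (gXM I2)) (fa_mult (gXM I2) (gXP I1)),
         fa_sub (fa_mult (gXM I1) (gXP I2)) (fa_mult (gXP I2) (gXM I1)),
         fa_sub (fa_mult (gXP I2) (gXM I1)) (fa_mult (gXM I1) (gXP I2)),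
         fa_sub (fa_mult (gXM I2) (gXP I1)) (fa_mult (gXP I1) (gXM I2)) }"

definition tgwa_tilde_ideal :: "(idx \<Rightarrow> complex) \<Rightarrow> (idx \<Rightarrow> complex poly) \<Rightarrow> (gen list \<Rightarrow> complex) set" where
  "tgwa_tilde_ideal \<alpha> t = genideal free_alg (tgwa_rels \<alpha> t)"

fun gen_deg :: "gen \<Rightarrow> idx \<Rightarrow> int" where
  "gen_deg G0 = (\<lambda>_. 0)"
| "gen_deg (XP i) = (\<lambda>j. if j = i then 1 else 0)"
| "gen_deg (XM i) = (\<lambda>j. if j = i then -1 else 0)"

definition word_deg :: "gen list \<Rightarrow> idx \<Rightarrow> int" where
  "word_deg w = (\<lambda>j. sum_list (map (\<lambda>x. gen_deg x j) w))"

definition hom_comp :: "(idx \<Rightarrow> int) \<Rightarrow> (gen list \<Rightarrow> complex) \<Rightarrow> gen list \<Rightarrow> complex" where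
  "hom_comp d f = (\<lambda>w. if word_deg w = d then f w else 0)"

text \<open>Preimages \<open>J\<close> in the free algebra of graded ideals of \<open>\<tilde>A(R,\<sigma>,t)\<close> meeting (the image of) \<open>R\<close> trivially.\<close>
definition tgwa_good_ideal :: "(idx \<Rightarrow> complex) \<Rightarrow> (idx \<Rightarrow> complex poly) \<Rightarrow> (gen list \<Rightarrow> complex) set \<Rightarrow> bool" where
  "tgwa_good_ideal \<alpha> t J \<longleftrightarrow>
     ideal J free_alg \<and> tgwa_tilde_ideal \<alpha> t \<subseteq> J \<and>
     (\<forall>f\<in>J. \<forall>d. hom_comp d f \<in> J) \<and>
     (\<forall>r. fa_poly r gH \<in> J \<longrightarrow> fa_poly r gH \<in> tgwa_tilde_ideal \<alpha> t)"

definition tgwa_ideal :: "(idx \<Rightarrow> complex) \<Rightarrow> (idx \<Rightarrow> complex poly) \<Rightarrow> (gen list \<Rightarrow> complex) set" where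
  "tgwa_ideal \<alpha> t = genideal free_alg (tgwa_tilde_ideal \<alpha> t \<union> \<Union>{J. tgwa_good_ideal \<alpha> t J})"

definition TGWA :: "(idx \<Rightarrow> complex) \<Rightarrow> (idx \<Rightarrow> complex poly) \<Rightarrow> (gen list \<Rightarrow> complex) set ring" where
  "TGWA \<alpha> t = free_alg Quot tgwa_ideal \<alpha> t"

end

theory Submission
  imports Defs "HOL-Library.Poly_Mapping" "HOL-Library.Function_Algebras"
begin

(* Both algebras are quotients of the free algebra on H, X_1^+, X_1^-, X_2^+, X_2^-, and the
   relations of the two tilde-algebras generate the same two-sided ideal I: the TGWA relations
   X_i^+- r(H) = r(H -+ alpha_i) X_i^+- follow from the commutation of X_i^+- with H. Hence both
   quotients are taken modulo ideals containing I, and it suffices to show that the torsion ideal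
   T = {a | f(H) a in I for some f <> 0} is the largest graded ideal containing I that meets
   C[H] only in I.

   T is graded, because I is. It meets C[H] only in I because I contains no nonzero polynomial
   in H: I acts trivially on a module of C[u]-valued functions on Z^2 on which C[H] acts
   faithfully, and it is in verifying the relation X_1^- X_2^+ = X_2^+ X_1^- there that the
   hypothesis on p_1, p_2 is used. Conversely, every word of degree zero is congruent modulo I
   to a polynomial in H, by cancelling adjacent letters X_i^+ X_i^- after commuting them together.
   So if J is a graded ideal as above and y in J is homogeneous of degree d, then for a word M
   of degree -d, M y = r(H) mod I with r(H) in J, whence M y in I; and M' M = g(H) mod I with
   g <> 0 for the reversed word M' of opposite letters, so g(H) y in I and y in T. *)

section \<open>The free algebra as a type-class ring\<close>

text \<open>Words form a monoid under concatenation, so \<open>word \<Rightarrow>\<^sub>0 complex\<close> with the convolution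
  product of \<^theory>\<open>HOL-Library.Poly_Mapping\<close> is the free algebra; \<open>coeff_fun\<close> identifies
  it with \<open>free_alg\<close>, and all computations are done on the type-class side.\<close>

datatype word = Word (letters: "gen list")

instantiation word :: monoid_add
begin
definition zero_word where "0 = Word []"
definition plus_word where "a + b = Word (letters a @ letters b)"
instance by standard (auto simp: zero_word_def plus_word_def)
end

lemma Word_append: "Word (u @ v) = Word u + Word v"
  by (simp add: plus_word_def)

lemma letters_add [simp]: "letters (a + b) = letters a @ letters b"
  by (simp add: plus_word_def)

lemma letters_zero [simp]: "letters 0 = []"
  by (simp add: zero_word_def)

type_synonym ncpoly = "word \<Rightarrow>\<^sub>0 complex"

abbreviation FA :: "(gen list \<Rightarrow> complex) ring" where
  "FA \<equiv> free_alg"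

lemma poly_mapping_induct [case_names zero single add]:
  fixes f :: "'a \<Rightarrow>\<^sub>0 'b::monoid_add"
  assumes "P 0" "\<And>k c. P (Poly_Mapping.single k c)" "\<And>a b. P a \<Longrightarrow> P b \<Longrightarrow> P (a + b)"
  shows "P f"
proof (induction f rule: Poly_Mapping.update_induct)
  case const then show ?case using assms(1) by simp
next
  case (update f a b)
  have "Poly_Mapping.update a b f = f + Poly_Mapping.single a b"
    using update(1) by (intro poly_mapping_eqI) (auto simp: Poly_Mapping.lookup_update
        Poly_Mapping.lookup_add Poly_Mapping.lookup_single in_keys_iff when_def)
  then show ?case using update assms by simp
qed

lemma poly_mapping_sum_single:
  "f = (\<Sum>k\<in>Poly_Mapping.keys f. Poly_Mapping.single k (Poly_Mapping.lookup f k))"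
proof (rule poly_mapping_eqI)
  fix j
  have "Poly_Mapping.lookup (\<Sum>k\<in>Poly_Mapping.keys f. Poly_Mapping.single k (Poly_Mapping.lookup f k)) j
      = (\<Sum>k\<in>Poly_Mapping.keys f. if k = j then Poly_Mapping.lookup f k else 0)"
    by (simp add: Poly_Mapping.lookup_sum Poly_Mapping.lookup_single when_def)
  also have "\<dots> = Poly_Mapping.lookup f j" by (simp add: sum.delta in_keys_iff)
  finally show "Poly_Mapping.lookup f j
      = Poly_Mapping.lookup (\<Sum>k\<in>Poly_Mapping.keys f. Poly_Mapping.single k (Poly_Mapping.lookup f k)) j"
    by simp
qed

definition coeff_fun :: "ncpoly \<Rightarrow> gen list \<Rightarrow> complex" where
  "coeff_fun a = (\<lambda>w. Poly_Mapping.lookup a (Word w))"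

lemma coeff_fun_inject [simp]: "coeff_fun a = coeff_fun b \<longleftrightarrow> a = b"
  unfolding coeff_fun_def by (metis poly_mapping_eqI word.collapse)

lemma image_coeff_fun_iff [simp]: "coeff_fun a \<in> coeff_fun ` X \<longleftrightarrow> a \<in> X"
  by auto

lemma carrier_FA: "carrier FA = range coeff_fun"
proof (intro equalityI subsetI)
  fix f :: "gen list \<Rightarrow> complex" assume "f \<in> carrier FA"
  then have "finite {w. f w \<noteq> 0}" by (simp add: free_alg_def)
  moreover have "{k. f (letters k) \<noteq> 0} \<subseteq> Word ` {w. f w \<noteq> 0}"
    by (auto intro: image_eqI[where x = "letters _"])
  ultimately have "finite {k. f (letters k) \<noteq> 0}"
    using finite_subset by blast
  then have "coeff_fun (Abs_poly_mapping (\<lambda>k. f (letters k))) = f" by (simp add: coeff_fun_def)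
  then show "f \<in> range coeff_fun" by (metis rangeI)
next
  fix f assume "f \<in> range coeff_fun"
  then obtain a where a: "f = coeff_fun a" by blast
  have "{w. Poly_Mapping.lookup a (Word w) \<noteq> 0} \<subseteq> letters ` Poly_Mapping.keys a"
    by (auto simp: in_keys_iff intro: image_eqI[where x = "Word _"])
  then have "finite {w. Poly_Mapping.lookup a (Word w) \<noteq> 0}" by (rule finite_subset) simp
  then show "f \<in> carrier FA" by (simp add: free_alg_def a coeff_fun_def)
qed

lemma coeff_fun_in_carrier: "coeff_fun a \<in> carrier FA"
  by (simp add: carrier_FA)

lemma fa_mult_single:
  "fa_mult (\<lambda>w. if w = u then c else 0) (\<lambda>w. if w = v then d else 0)
   = (\<lambda>w. if w = u @ v then c * d else 0)"
proof
  fix w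
  have split: "take k w = u \<and> drop k w = v \<longleftrightarrow> k = length u \<and> w = u @ v" if "k \<le> length w" for k
    using that by auto
  have "(\<Sum>k\<le>length w. (if take k w = u then c else 0) * (if drop k w = v then d else 0))
      = (\<Sum>k\<le>length w. if w = u @ v then (if k = length u then c * d else 0) else 0)"
  proof (rule sum.cong[OF refl])
    fix k assume "k \<in> {..length w}"
    then show "(if take k w = u then c else 0) * (if drop k w = v then d else 0)
        = (if w = u @ v then (if k = length u then c * d else 0) else 0)"
      using split[of k] by (cases "take k w = u"; cases "drop k w = v") auto
  qed
  then show "fa_mult (\<lambda>w. if w = u then c else 0) (\<lambda>w. if w = v then d else 0) w
      = (if w = u @ v then c * d else 0)"
    by (simp add: fa_mult_def)
qed

lemma coeff_fun_add: "coeff_fun (a + b) = fa_add (coeff_fun a) (coeff_fun b)"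
  by (simp add: coeff_fun_def fa_add_def Poly_Mapping.lookup_add)

lemma coeff_fun_diff: "coeff_fun (a - b) = fa_sub (coeff_fun a) (coeff_fun b)"
  by (simp add: coeff_fun_def fa_sub_def Poly_Mapping.lookup_minus)

lemma coeff_fun_zero: "coeff_fun 0 = (\<lambda>_. 0)"
  by (simp add: coeff_fun_def)

lemma coeff_fun_single: "coeff_fun (Poly_Mapping.single (Word u) c) = (\<lambda>w. if w = u then c else 0)"
  by (auto simp: coeff_fun_def Poly_Mapping.lookup_single when_def)

lemma coeff_fun_mult: "coeff_fun (a * b) = fa_mult (coeff_fun a) (coeff_fun b)"
proof (induction a rule: poly_mapping_induct)
  case zero then show ?case by (simp add: coeff_fun_zero fa_mult_def)
next
  case (add a1 a2) then show ?case
    by (simp add: distrib_right coeff_fun_add fa_mult_def fa_add_def distrib_right sum.distrib)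
next
  case (single k c)
  show ?case
  proof (induction b rule: poly_mapping_induct)
    case zero then show ?case by (simp add: coeff_fun_zero fa_mult_def)
  next
    case (add b1 b2) then show ?case
      by (simp add: distrib_left coeff_fun_add fa_mult_def fa_add_def distrib_left sum.distrib)
  next
    case (single l d)
    obtain u v where "k = Word u" "l = Word v" by (metis word.collapse)
    then show ?case
      by (simp add: Poly_Mapping.mult_single coeff_fun_single fa_mult_single Word_append[symmetric])
  qed
qed

lemma free_alg_ops:
  "x \<oplus>\<^bsub>FA\<^esub> y = fa_add x y" "x \<otimes>\<^bsub>FA\<^esub> y = fa_mult x y"
  "\<zero>\<^bsub>FA\<^esub> = (\<lambda>_. 0)" "\<one>\<^bsub>FA\<^esub> = fa_const 1"
  by (simp_all add: free_alg_def)

lemma coeff_fun_one: "coeff_fun 1 = fa_const 1"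
  by (auto simp: coeff_fun_def fa_const_def zero_word_def Poly_Mapping.lookup_one)

lemma ring_FA: "ring FA"
proof -
  note transport = free_alg_ops coeff_fun_add[symmetric] coeff_fun_mult[symmetric]
    coeff_fun_zero[symmetric] coeff_fun_one[symmetric] coeff_fun_in_carrier
  show ?thesis
  proof (rule ringI)
    show "abelian_group FA"
    proof (rule abelian_groupI)
      fix x assume "x \<in> carrier FA"
      then obtain a where "x = coeff_fun a" by (auto simp: carrier_FA)
      moreover have "coeff_fun (- a) \<oplus>\<^bsub>FA\<^esub> coeff_fun a = \<zero>\<^bsub>FA\<^esub>"
        by (simp only: transport left_minus)
      ultimately show "\<exists>y\<in>carrier FA. y \<oplus>\<^bsub>FA\<^esub> x = \<zero>\<^bsub>FA\<^esub>"
        using coeff_fun_in_carrier by blast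
    qed (auto simp: carrier_FA transport add.assoc add.commute)
  next
    show "monoid FA"
      by (rule monoidI) (auto simp: carrier_FA transport mult.assoc)
  qed (auto simp: carrier_FA transport distrib_left distrib_right)
qed

interpretation FA: ring FA
  by (rule ring_FA)

section \<open>Two-sided ideals\<close>

locale two_sided_ideal =
  fixes I :: "'a::ring_1 set"
  assumes zero_mem: "0 \<in> I"
    and add_mem: "a \<in> I \<Longrightarrow> b \<in> I \<Longrightarrow> a + b \<in> I"
    and mult_left_mem: "a \<in> I \<Longrightarrow> c * a \<in> I"
    and mult_right_mem: "a \<in> I \<Longrightarrow> a * c \<in> I"
begin

lemma uminus_mem: "a \<in> I \<Longrightarrow> - a \<in> I"
  using mult_left_mem[of a "- 1"] by simp

lemma diff_mem: "a \<in> I \<Longrightarrow> b \<in> I \<Longrightarrow> a - b \<in> I"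
  using add_mem[of a "- b"] uminus_mem by simp

lemma sum_mem: "(\<And>k. k \<in> S \<Longrightarrow> f k \<in> I) \<Longrightarrow> sum f S \<in> I"
  by (induction S rule: infinite_finite_induct) (simp_all add: zero_mem add_mem)

lemma diff_sym: "x - y \<in> I \<Longrightarrow> y - x \<in> I"
  using uminus_mem[of "x - y"] by simp

lemma diff_trans: "x - y \<in> I \<Longrightarrow> y - z \<in> I \<Longrightarrow> x - z \<in> I"
  using add_mem[of "x - y" "y - z"] by simp

lemma commute_power:
  assumes "x * y - y * x \<in> I"
  shows "x * y ^ k - y ^ k * x \<in> I"
proof (induction k)
  case (Suc k)
  have "x * y ^ Suc k - y ^ Suc k * x = (x * y - y * x) * y ^ k + y * (x * y ^ k - y ^ k * x)"
    by (simp add: algebra_simps power_commutes)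
  then show ?case using add_mem[OF mult_right_mem[OF assms] mult_left_mem[OF Suc.IH]] by simp
qed (simp add: zero_mem)

lemma diff_cong: "x - y \<in> I \<Longrightarrow> a * x * b - a * y * b \<in> I"
proof -
  assume "x - y \<in> I"
  then have "a * (x - y) * b \<in> I" by (intro mult_left_mem mult_right_mem)
  then show ?thesis by (simp add: algebra_simps)
qed

end

lemma two_sided_ideal_Inter:
  "(\<And>X. X \<in> F \<Longrightarrow> two_sided_ideal X) \<Longrightarrow> two_sided_ideal (\<Inter>F)"
  unfolding two_sided_ideal_def by blast

definition ideal_span :: "'a::ring_1 set \<Rightarrow> 'a set" where
  "ideal_span S = \<Inter>{X. two_sided_ideal X \<and> S \<subseteq> X}"

lemma two_sided_ideal_span: "two_sided_ideal (ideal_span S)"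
  unfolding ideal_span_def by (rule two_sided_ideal_Inter) auto

lemma ideal_span_superset: "S \<subseteq> ideal_span S"
  unfolding ideal_span_def by auto

lemma ideal_span_minimal: "two_sided_ideal X \<Longrightarrow> S \<subseteq> X \<Longrightarrow> ideal_span S \<subseteq> X"
  unfolding ideal_span_def by auto

lemma ideal_span_eq: "A \<subseteq> ideal_span B \<Longrightarrow> B \<subseteq> ideal_span A \<Longrightarrow> ideal_span A = ideal_span B"
  using ideal_span_minimal[OF two_sided_ideal_span] by blast

lemma ideal_span_of_ideal: "two_sided_ideal X \<Longrightarrow> ideal_span X = X"
  using ideal_span_minimal ideal_span_superset by blast

lemma ideal_FA_image:
  assumes "two_sided_ideal X"
  shows "ideal (coeff_fun ` X) FA"
proof -
  interpret X: two_sided_ideal X by fact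
  have neg: "\<ominus>\<^bsub>FA\<^esub> coeff_fun a = coeff_fun (- a)" for a
    by (rule FA.minus_equality)
      (simp_all add: free_alg_ops coeff_fun_add[symmetric] coeff_fun_zero[symmetric] coeff_fun_in_carrier)
  show ?thesis
  proof (rule idealI[OF ring_FA])
    show "subgroup (coeff_fun ` X) (add_monoid FA)"
      by (rule FA.add.subgroupI)
        (auto simp: coeff_fun_in_carrier neg free_alg_ops coeff_fun_add[symmetric]
          intro: X.zero_mem X.uminus_mem X.add_mem)
  qed (auto simp: carrier_FA free_alg_ops coeff_fun_mult[symmetric]
      intro: X.mult_left_mem X.mult_right_mem)
qed

lemma ideal_FA_preimage:
  assumes "ideal J FA"
  shows "two_sided_ideal {a. coeff_fun a \<in> J}" and "J = coeff_fun ` {a. coeff_fun a \<in> J}"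
proof -
  interpret ideal J FA by fact
  show "two_sided_ideal {a. coeff_fun a \<in> J}"
  proof
    show "0 \<in> {a. coeff_fun a \<in> J}"
      using zero_closed by (simp add: coeff_fun_zero free_alg_ops)
  qed (use a_closed I_l_closed I_r_closed coeff_fun_in_carrier in
      \<open>auto simp: coeff_fun_add coeff_fun_mult free_alg_ops\<close>)
  show "J = coeff_fun ` {a. coeff_fun a \<in> J}"
    using a_subset by (auto simp: carrier_FA)
qed

lemma genideal_FA_image: "genideal FA (coeff_fun ` S) = coeff_fun ` ideal_span S"
proof
  show "genideal FA (coeff_fun ` S) \<subseteq> coeff_fun ` ideal_span S"
    unfolding genideal_def using ideal_FA_image[OF two_sided_ideal_span] ideal_span_superset by blast
next
  have "ideal (genideal FA (coeff_fun ` S)) FA"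
    by (rule FA.genideal_ideal) (auto simp: coeff_fun_in_carrier)
  moreover have "coeff_fun ` S \<subseteq> genideal FA (coeff_fun ` S)"
    by (rule FA.genideal_self) (auto simp: coeff_fun_in_carrier)
  ultimately have "ideal_span S \<subseteq> {a. coeff_fun a \<in> genideal FA (coeff_fun ` S)}"
    by (intro ideal_span_minimal ideal_FA_preimage) auto
  then show "coeff_fun ` ideal_span S \<subseteq> genideal FA (coeff_fun ` S)" by auto
qed

definition scalar :: "complex \<Rightarrow> ncpoly" where
  "scalar c = Poly_Mapping.single 0 c"

definition wmon :: "gen list \<Rightarrow> ncpoly" where
  "wmon w = Poly_Mapping.single (Word w) 1"

lemma scalar_commute: "scalar c * a = a * scalar c"
proof (induction a rule: poly_mapping_induct)
  case (single k d) then show ?case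
    by (simp add: scalar_def Poly_Mapping.mult_single mult.commute)
qed (simp_all add: distrib_left distrib_right)

lemma scalar_add: "scalar (c + d) = scalar c + scalar d"
  by (simp add: scalar_def Poly_Mapping.single_add)

lemma scalar_mult: "scalar (c * d) = scalar c * scalar d"
  by (simp add: scalar_def Poly_Mapping.mult_single)

lemma scalar_uminus: "scalar (- c) = - scalar c"
  by (simp add: scalar_def Poly_Mapping.single_uminus)

lemma scalar_0 [simp]: "scalar 0 = 0"
  by (simp add: scalar_def)

lemma scalar_1 [simp]: "scalar 1 = 1"
  by (simp add: scalar_def)

lemma lookup_scalar_mult: "Poly_Mapping.lookup (scalar c * a) k = c * Poly_Mapping.lookup a k"
proof (induction a rule: poly_mapping_induct)
  case (single l d) then show ?case
    by (simp add: scalar_def Poly_Mapping.mult_single Poly_Mapping.lookup_single when_def)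
qed (simp_all add: distrib_left Poly_Mapping.lookup_add)

lemma wmon_append: "wmon (u @ v) = wmon u * wmon v"
  by (simp add: wmon_def Poly_Mapping.mult_single Word_append)

lemma wmon_Nil [simp]: "wmon [] = 1"
  by (simp add: wmon_def zero_word_def[symmetric])

lemma wmon_Cons: "wmon (g # w) = wmon [g] * wmon w"
  using wmon_append[of "[g]" w] by simp

lemma wmon_replicate: "wmon (replicate k g) = wmon [g] ^ k"
proof (induction k)
  case (Suc k) then show ?case using wmon_Cons[of g "replicate k g"] by simp
qed simp

lemma single_eq_scalar_wmon: "Poly_Mapping.single k c = scalar c * wmon (letters k)"
  by (simp add: scalar_def wmon_def Poly_Mapping.mult_single)

definition peval :: "complex poly \<Rightarrow> ncpoly \<Rightarrow> ncpoly" where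
  "peval r x = (\<Sum>k\<le>degree r. scalar (coeff r k) * x ^ k)"

lemma peval_bound:
  assumes "degree r \<le> n"
  shows "peval r x = (\<Sum>k\<le>n. scalar (coeff r k) * x ^ k)"
  unfolding peval_def
  by (rule sum.mono_neutral_left) (use assms in \<open>auto simp: coeff_eq_0\<close>)

lemma peval_0 [simp]: "peval 0 x = 0"
  by (simp add: peval_def)

lemma peval_pCons: "peval (pCons a r) x = scalar a + x * peval r x"
proof -
  have "peval (pCons a r) x = (\<Sum>k\<le>Suc (degree r). scalar (coeff (pCons a r) k) * x ^ k)"
    by (rule peval_bound) (simp add: degree_pCons_le)
  also have "\<dots> = scalar a + (\<Sum>k\<le>degree r. scalar (coeff r k) * x ^ Suc k)"
    by (subst sum.atMost_Suc_shift) simp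
  also have "(\<Sum>k\<le>degree r. scalar (coeff r k) * x ^ Suc k) = x * peval r x"
  proof -
    have "scalar c * x ^ Suc k = x * (scalar c * x ^ k)" for c k
      by (metis scalar_commute mult.assoc power_Suc)
    then show ?thesis by (simp only: peval_def sum_distrib_left)
  qed
  finally show ?thesis .
qed

lemma peval_const: "peval [:c:] x = scalar c"
  by (simp add: peval_pCons)

lemma peval_1 [simp]: "peval 1 x = 1"
  using peval_const[of 1 x] by (simp add: one_pCons)

lemma peval_X: "peval [:0, 1:] x = x"
  by (simp add: peval_pCons)

lemma peval_add: "peval (r + s) x = peval r x + peval s x"
proof (induction r arbitrary: s)
  case (pCons a r)
  then show ?case
    by (cases s) (simp add: peval_pCons scalar_add distrib_left add_ac)
qed simp

lemma peval_smult: "peval (smult c r) x = scalar c * peval r x"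
proof (induction r)
  case (pCons a r)
  have "x * (scalar c * y) = scalar c * (x * y)" for y
    by (metis scalar_commute mult.assoc)
  with pCons.IH show ?case
    by (simp add: peval_pCons scalar_mult distrib_left)
qed simp

lemma peval_mult: "peval (r * s) x = peval r x * peval s x"
  by (induction r) (simp_all add: peval_add peval_smult peval_pCons distrib_right mult.assoc)

lemma peval_commute: "peval r x * peval s x = peval s x * peval r x"
  by (metis peval_mult mult.commute)

lemma peval_pcompose: "peval (pcompose r q) x = peval r (peval q x)"
  by (induction r) (simp_all add: pcompose_pCons peval_add peval_mult peval_const peval_pCons)

lemma peval_sum: "peval (\<Sum>k\<in>S. f k) x = (\<Sum>k\<in>S. peval (f k) x)"
  by (induction S rule: infinite_finite_induct) (simp_all add: peval_add)

lemma coeff_fun_wmon: "coeff_fun (wmon w) = (\<lambda>v. if v = w then 1 else 0)"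
  by (simp add: wmon_def coeff_fun_single)

lemma fa_gen_eq: "fa_gen g = coeff_fun (wmon [g])"
  by (simp add: coeff_fun_wmon fa_gen_def)

lemma fa_const_eq: "fa_const c = coeff_fun (scalar c)"
  by (auto simp: coeff_fun_def scalar_def Poly_Mapping.lookup_single when_def fa_const_def zero_word_def)

lemma fa_smult_eq: "fa_smult c (coeff_fun a) = coeff_fun (scalar c * a)"
  by (simp add: coeff_fun_def fa_smult_def lookup_scalar_mult)

lemma fa_poly_eq: "fa_poly r (coeff_fun x) = coeff_fun (peval r x)"
proof -
  have "fa_pow (coeff_fun x) k = coeff_fun (x ^ k)" for k
    by (induction k) (simp_all add: coeff_fun_one coeff_fun_mult[symmetric] power_commutes)
  then show ?thesis
    by (simp add: fa_poly_def peval_def coeff_fun_def Poly_Mapping.lookup_sum lookup_scalar_mult)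
qed

abbreviation H :: ncpoly where "H \<equiv> wmon [G0]"
abbreviation Xp :: "idx \<Rightarrow> ncpoly" where "Xp i \<equiv> wmon [XP i]"
abbreviation Xm :: "idx \<Rightarrow> ncpoly" where "Xm i \<equiv> wmon [XM i]"

definition polyH :: "complex poly \<Rightarrow> ncpoly" where
  "polyH r = peval r H"

lemma polyH_mult: "polyH (f * g) = polyH f * polyH g"
  by (simp add: polyH_def peval_mult)

lemma polyH_commute: "polyH f * polyH g = polyH g * polyH f"
  by (simp add: polyH_def peval_commute)

lemma polyH_1 [simp]: "polyH 1 = 1"
  by (simp add: polyH_def)

lemma polyH_X: "polyH [:0, 1:] = H"
  by (simp add: polyH_def peval_X)

lemma polyH_sum: "polyH (\<Sum>k\<in>S. f k) = (\<Sum>k\<in>S. polyH (f k))"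
  by (simp add: polyH_def peval_sum)

lemma polyH_smult: "polyH (smult c r) = scalar c * polyH r"
  by (simp add: polyH_def peval_smult)

lemma shift_shift: "shift a (shift b r) = shift (a + b) r"
proof -
  have "pcompose [:b, 1:] [:a, 1:] = [:a + b, 1:]"
    by (simp add: pcompose_pCons one_pCons)
  then show ?thesis by (simp add: shift_def pcompose_assoc[symmetric] add.commute)
qed

lemma shift_0 [simp]: "shift 0 r = r"
  by (simp add: shift_def pcompose_idR)

lemma shift_eq_0_iff [simp]: "shift c r = 0 \<longleftrightarrow> r = 0"
  by (metis shift_shift shift_0 add.left_inverse pcompose_0 shift_def)

lemma shift_mult: "shift c (r * s) = shift c r * shift c s"
  by (simp add: shift_def pcompose_mult)

lemma polyH_shift: "polyH (shift c r) = peval r (H + scalar c)"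
  by (simp add: polyH_def shift_def peval_pcompose peval_pCons add.commute)

lemma polyH_shift_X: "polyH (shift c [:0, 1:]) = H + scalar c"
  by (simp add: polyH_shift peval_X)

definition kfp_relators :: "(idx \<Rightarrow> complex) \<Rightarrow> (idx \<Rightarrow> complex poly) \<Rightarrow> ncpoly set" where
  "kfp_relators \<alpha> p =
     (\<Union>i. { H * Xp i - Xp i * H - scalar (\<alpha> i) * Xp i,
             H * Xm i - Xm i * H - scalar (- \<alpha> i) * Xm i,
             Xp i * Xm i - peval (p i) (H - scalar (\<alpha> i / 2)),
             Xm i * Xp i - peval (p i) (H + scalar (\<alpha> i / 2)) })
     \<union> { Xp I1 * Xm I2 - Xm I2 * Xp I1, Xm I1 * Xp I2 - Xp I2 * Xm I1 }"

definition tgwa_relators :: "(idx \<Rightarrow> complex) \<Rightarrow> (idx \<Rightarrow> complex poly) \<Rightarrow> ncpoly set" where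
  "tgwa_relators \<alpha> t =
     (\<Union>i. \<Union>r. { Xp i * polyH r - polyH (shift (- \<alpha> i) r) * Xp i,
                 Xm i * polyH r - polyH (shift (\<alpha> i) r) * Xm i })
     \<union> (\<Union>i. { Xp i * Xm i - polyH (shift (- \<alpha> i / 2) (t i)),
              Xm i * Xp i - polyH (shift (\<alpha> i / 2) (t i)) })
     \<union> { Xp I1 * Xm I2 - Xm I2 * Xp I1, Xm I1 * Xp I2 - Xp I2 * Xm I1,
         Xp I2 * Xm I1 - Xm I1 * Xp I2, Xm I2 * Xp I1 - Xp I1 * Xm I2 }"

lemma kfp_rels_eq: "kfp_rels \<alpha> p = coeff_fun ` kfp_relators \<alpha> p"
  unfolding kfp_rels_def kfp_relators_def
  by (simp only: fa_gen_eq fa_const_eq fa_smult_eq fa_poly_eq coeff_fun_mult[symmetric]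
      coeff_fun_diff[symmetric] coeff_fun_add[symmetric] image_Un image_UN image_insert image_empty)

lemma tgwa_rels_eq: "tgwa_rels \<alpha> t = coeff_fun ` tgwa_relators \<alpha> t"
  unfolding tgwa_rels_def tgwa_relators_def polyH_def
  by (simp only: fa_gen_eq fa_poly_eq coeff_fun_mult[symmetric] coeff_fun_diff[symmetric]
      image_Un image_UN image_insert image_empty)

lemma commute_polyH:
  assumes "two_sided_ideal I" and "Y * H - (H + scalar b) * Y \<in> I"
  shows "Y * polyH r - polyH (shift b r) * Y \<in> I"
proof -
  interpret two_sided_ideal I by fact
  show ?thesis
  proof (induction r)
    case 0 then show ?case by (simp add: polyH_def shift_def zero_mem)
  next
    case (pCons a r)
    have e1: "polyH (pCons a r) = scalar a + H * polyH r"
      by (simp add: polyH_def peval_pCons)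
    have e2: "polyH (shift b (pCons a r)) = scalar a + (H + scalar b) * polyH (shift b r)"
      by (simp only: polyH_shift peval_pCons)
    have "Y * polyH (pCons a r) - polyH (shift b (pCons a r)) * Y
        = (Y * H - (H + scalar b) * Y) * polyH r
          + (H + scalar b) * (Y * polyH r - polyH (shift b r) * Y)"
      unfolding e1 e2 by (simp add: algebra_simps scalar_commute[of a Y])
    then show ?case using add_mem[OF mult_right_mem[OF assms(2)] mult_left_mem[OF pCons.IH]] by simp
  qed
qed

lemma peval_H_diff: "peval q (H - scalar c) = polyH (shift (- c) q)"
  by (simp only: polyH_shift scalar_uminus diff_conv_add_uminus)

lemma kfp_relators_subset: "kfp_relators \<alpha> p \<subseteq> ideal_span (tgwa_relators \<alpha> p)"
proof
  interpret J: two_sided_ideal "ideal_span (tgwa_relators \<alpha> p)"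
    by (rule two_sided_ideal_span)
  have T: "x \<in> ideal_span (tgwa_relators \<alpha> p)" if "x \<in> tgwa_relators \<alpha> p" for x
    using that ideal_span_superset by blast
  fix x assume "x \<in> kfp_relators \<alpha> p"
  then consider (Hp) i where "x = H * Xp i - Xp i * H - scalar (\<alpha> i) * Xp i"
    | (Hm) i where "x = H * Xm i - Xm i * H - scalar (- \<alpha> i) * Xm i"
    | (pm) i where "x = Xp i * Xm i - peval (p i) (H - scalar (\<alpha> i / 2))"
    | (mp) i where "x = Xm i * Xp i - peval (p i) (H + scalar (\<alpha> i / 2))"
    | (cross1) "x = Xp I1 * Xm I2 - Xm I2 * Xp I1"
    | (cross2) "x = Xm I1 * Xp I2 - Xp I2 * Xm I1"
    unfolding kfp_relators_def by blast
  then show "x \<in> ideal_span (tgwa_relators \<alpha> p)"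
  proof cases
    case (Hp i)
    have "x = - (Xp i * polyH [:0,1:] - polyH (shift (- \<alpha> i) [:0,1:]) * Xp i)"
      by (simp add: Hp polyH_X polyH_shift_X algebra_simps scalar_uminus)
    moreover have "Xp i * polyH [:0,1:] - polyH (shift (- \<alpha> i) [:0,1:]) * Xp i \<in> tgwa_relators \<alpha> p"
      unfolding tgwa_relators_def by blast
    ultimately show ?thesis by (metis J.uminus_mem T)
  next
    case (Hm i)
    have "x = - (Xm i * polyH [:0,1:] - polyH (shift (\<alpha> i) [:0,1:]) * Xm i)"
      by (simp add: Hm polyH_X polyH_shift_X algebra_simps scalar_uminus)
    moreover have "Xm i * polyH [:0,1:] - polyH (shift (\<alpha> i) [:0,1:]) * Xm i \<in> tgwa_relators \<alpha> p"
      unfolding tgwa_relators_def by blast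
    ultimately show ?thesis by (metis J.uminus_mem T)
  qed (use T in \<open>auto simp: tgwa_relators_def peval_H_diff polyH_shift[symmetric]\<close>)
qed

lemma tgwa_relators_subset: "tgwa_relators \<alpha> p \<subseteq> ideal_span (kfp_relators \<alpha> p)"
proof
  interpret J: two_sided_ideal "ideal_span (kfp_relators \<alpha> p)"
    by (rule two_sided_ideal_span)
  have K: "x \<in> ideal_span (kfp_relators \<alpha> p)" if "x \<in> kfp_relators \<alpha> p" for x
    using that ideal_span_superset by blast
  have Hp: "Xp i * H - (H + scalar (- \<alpha> i)) * Xp i \<in> ideal_span (kfp_relators \<alpha> p)" for i
  proof -
    have "Xp i * H - (H + scalar (- \<alpha> i)) * Xp i = - (H * Xp i - Xp i * H - scalar (\<alpha> i) * Xp i)"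
      by (simp add: algebra_simps scalar_uminus)
    moreover have "H * Xp i - Xp i * H - scalar (\<alpha> i) * Xp i \<in> kfp_relators \<alpha> p"
      unfolding kfp_relators_def by blast
    ultimately show ?thesis by (metis J.uminus_mem K)
  qed
  have Hm: "Xm i * H - (H + scalar (\<alpha> i)) * Xm i \<in> ideal_span (kfp_relators \<alpha> p)" for i
  proof -
    have "Xm i * H - (H + scalar (\<alpha> i)) * Xm i = - (H * Xm i - Xm i * H - scalar (- \<alpha> i) * Xm i)"
      by (simp add: algebra_simps scalar_uminus)
    moreover have "H * Xm i - Xm i * H - scalar (- \<alpha> i) * Xm i \<in> kfp_relators \<alpha> p"
      unfolding kfp_relators_def by blast
    ultimately show ?thesis by (metis J.uminus_mem K)
  qed
  fix x assume "x \<in> tgwa_relators \<alpha> p"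
  then consider (shiftp) i r where "x = Xp i * polyH r - polyH (shift (- \<alpha> i) r) * Xp i"
    | (shiftm) i r where "x = Xm i * polyH r - polyH (shift (\<alpha> i) r) * Xm i"
    | (pm) i where "x = Xp i * Xm i - polyH (shift (- \<alpha> i / 2) (p i))"
    | (mp) i where "x = Xm i * Xp i - polyH (shift (\<alpha> i / 2) (p i))"
    | (cross1) "x = Xp I1 * Xm I2 - Xm I2 * Xp I1" | (cross2) "x = Xm I1 * Xp I2 - Xp I2 * Xm I1"
    | (cross1') "x = Xp I2 * Xm I1 - Xm I1 * Xp I2" | (cross2') "x = Xm I2 * Xp I1 - Xp I1 * Xm I2"
    unfolding tgwa_relators_def by blast
  then show "x \<in> ideal_span (kfp_relators \<alpha> p)"
  proof cases
    case (shiftp i r) then show ?thesis using commute_polyH[OF J.two_sided_ideal_axioms Hp] by simp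
  next
    case (shiftm i r) then show ?thesis using commute_polyH[OF J.two_sided_ideal_axioms Hm] by simp
  next
    case cross1' then show ?thesis
      using J.uminus_mem[OF K, of "Xm I1 * Xp I2 - Xp I2 * Xm I1"] by (simp add: kfp_relators_def)
  next
    case cross2' then show ?thesis
      using J.uminus_mem[OF K, of "Xp I1 * Xm I2 - Xm I2 * Xp I1"] by (simp add: kfp_relators_def)
  qed (use K in \<open>auto simp: kfp_relators_def peval_H_diff polyH_shift[symmetric]\<close>)
qed

definition rel_ideal :: "(idx \<Rightarrow> complex) \<Rightarrow> (idx \<Rightarrow> complex poly) \<Rightarrow> ncpoly set" where
  "rel_ideal \<alpha> p = ideal_span (tgwa_relators \<alpha> p)"

interpretation rel_ideal: two_sided_ideal "rel_ideal \<alpha> p" for \<alpha> p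
  unfolding rel_ideal_def by (rule two_sided_ideal_span)

lemma kfp_relators_span: "ideal_span (kfp_relators \<alpha> p) = rel_ideal \<alpha> p"
  unfolding rel_ideal_def by (rule ideal_span_eq[OF kfp_relators_subset tgwa_relators_subset])

lemma tgwa_relator_mem: "x \<in> tgwa_relators \<alpha> p \<Longrightarrow> x \<in> rel_ideal \<alpha> p"
  unfolding rel_ideal_def using ideal_span_superset by blast

section \<open>The torsion ideal\<close>

fun gen_shift :: "(idx \<Rightarrow> complex) \<Rightarrow> gen \<Rightarrow> complex" where
  "gen_shift \<alpha> G0 = 0"
| "gen_shift \<alpha> (XP i) = - \<alpha> i"
| "gen_shift \<alpha> (XM i) = \<alpha> i"

definition word_shift :: "(idx \<Rightarrow> complex) \<Rightarrow> gen list \<Rightarrow> complex" where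
  "word_shift \<alpha> w = sum_list (map (gen_shift \<alpha>) w)"

lemma wmon_polyH: "wmon w * polyH r - polyH (shift (word_shift \<alpha> w) r) * wmon w \<in> rel_ideal \<alpha> p"
proof (induction w arbitrary: r)
  case Nil then show ?case by (simp add: word_shift_def rel_ideal.zero_mem)
next
  case (Cons g w)
  let ?q = "shift (word_shift \<alpha> w) r"
  have g: "wmon [g] * polyH q - polyH (shift (gen_shift \<alpha> g) q) * wmon [g] \<in> rel_ideal \<alpha> p" for q
  proof (cases g)
    case G0
    then show ?thesis
      using polyH_commute[of q "[:0, 1:]"] by (simp add: polyH_X rel_ideal.zero_mem)
  qed (intro tgwa_relator_mem, auto simp: tgwa_relators_def)+
  have "wmon (g # w) * polyH r - polyH (shift (word_shift \<alpha> (g # w)) r) * wmon (g # w)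
     = wmon [g] * (wmon w * polyH r - polyH ?q * wmon w)
       + (wmon [g] * polyH ?q - polyH (shift (gen_shift \<alpha> g) ?q) * wmon [g]) * wmon w"
    by (simp add: wmon_Cons[of g w] word_shift_def shift_shift algebra_simps)
  then show ?case
    using rel_ideal.add_mem[OF rel_ideal.mult_left_mem[OF Cons.IH] rel_ideal.mult_right_mem[OF g]]
    by simp
qed

definition torsion :: "(idx \<Rightarrow> complex) \<Rightarrow> (idx \<Rightarrow> complex poly) \<Rightarrow> ncpoly set" where
  "torsion \<alpha> p = {x. \<exists>f. f \<noteq> 0 \<and> polyH f * x \<in> rel_ideal \<alpha> p}"

lemma rel_ideal_subset_torsion: "rel_ideal \<alpha> p \<subseteq> torsion \<alpha> p"
  unfolding torsion_def by (auto intro!: exI[of _ 1])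

lemma torsion_wmon_mult:
  assumes "x \<in> torsion \<alpha> p"
  shows "wmon w * x \<in> torsion \<alpha> p"
proof -
  obtain f where f: "f \<noteq> 0" "polyH f * x \<in> rel_ideal \<alpha> p"
    using assms by (auto simp: torsion_def)
  let ?g = "shift (word_shift \<alpha> w) f"
  have "polyH ?g * (wmon w * x)
      = wmon w * (polyH f * x) - (wmon w * polyH f - polyH ?g * wmon w) * x"
    by (simp add: algebra_simps)
  also have "\<dots> \<in> rel_ideal \<alpha> p"
    by (intro rel_ideal.diff_mem rel_ideal.mult_left_mem rel_ideal.mult_right_mem f(2) wmon_polyH)
  finally have "polyH ?g * (wmon w * x) \<in> rel_ideal \<alpha> p" .
  moreover have "?g \<noteq> 0" using f(1) by simp
  ultimately show ?thesis unfolding torsion_def by blast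
qed

lemma torsion_add:
  assumes "a \<in> torsion \<alpha> p" and "b \<in> torsion \<alpha> p"
  shows "a + b \<in> torsion \<alpha> p"
proof -
  from assms obtain f g where f: "f \<noteq> 0" "polyH f * a \<in> rel_ideal \<alpha> p"
    and g: "g \<noteq> 0" "polyH g * b \<in> rel_ideal \<alpha> p"
    by (auto simp: torsion_def)
  have "polyH (f * g) * (a + b) = polyH g * (polyH f * a) + polyH f * (polyH g * b)"
    by (simp add: polyH_mult distrib_left mult.assoc[symmetric] polyH_commute[of f g])
  also have "\<dots> \<in> rel_ideal \<alpha> p"
    by (intro rel_ideal.add_mem rel_ideal.mult_left_mem f(2) g(2))
  finally have "polyH (f * g) * (a + b) \<in> rel_ideal \<alpha> p" .
  moreover have "f * g \<noteq> 0" using f(1) g(1) by simp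
  ultimately show ?thesis unfolding torsion_def by blast
qed

interpretation torsion: two_sided_ideal "torsion \<alpha> p" for \<alpha> p
proof
  show "0 \<in> torsion \<alpha> p"
    using rel_ideal_subset_torsion rel_ideal.zero_mem by blast
next
  show "a + b \<in> torsion \<alpha> p" if "a \<in> torsion \<alpha> p" "b \<in> torsion \<alpha> p" for a b
    using that by (rule torsion_add)
next
  fix a c assume "a \<in> torsion \<alpha> p"
  then show "a * c \<in> torsion \<alpha> p"
    by (auto simp: torsion_def mult.assoc[symmetric] intro: rel_ideal.mult_right_mem)
  show "c * a \<in> torsion \<alpha> p"
  proof (induction c rule: poly_mapping_induct)
    case zero then show ?case
      using rel_ideal_subset_torsion rel_ideal.zero_mem by (simp add: subset_iff)
  next
    case (single k d)
    obtain f where f: "f \<noteq> 0" "polyH f * (wmon (letters k) * a) \<in> rel_ideal \<alpha> p"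
      using torsion_wmon_mult[OF \<open>a \<in> torsion \<alpha> p\<close>] by (auto simp: torsion_def)
    have "polyH f * (Poly_Mapping.single k d * a) = scalar d * (polyH f * (wmon (letters k) * a))"
      by (simp add: single_eq_scalar_wmon mult.assoc) (metis scalar_commute mult.assoc)
    then show ?case
      using f rel_ideal.mult_left_mem by (auto simp: torsion_def)
  next
    case (add c1 c2)
    then show ?case by (simp add: distrib_right torsion_add)
  qed
qed

section \<open>The grading\<close>

lemma word_deg_append: "word_deg (u @ v) = word_deg u + word_deg v"
  by (simp add: word_deg_def fun_eq_iff)

lemma word_deg_Nil: "word_deg [] = 0"
  by (simp add: word_deg_def fun_eq_iff)

lemma word_deg_Cons: "word_deg (g # v) = gen_deg g + word_deg v"
  by (simp add: word_deg_def fun_eq_iff)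

lemma word_deg_replicate: "word_deg (replicate n g) j = int n * gen_deg g j"
  by (induction n) (simp_all add: word_deg_Cons word_deg_Nil algebra_simps)

definition wdeg :: "word \<Rightarrow> idx \<Rightarrow> int" where
  "wdeg k = word_deg (letters k)"

lemma wdeg_add: "wdeg (k + l) = wdeg k + wdeg l"
  by (simp add: wdeg_def word_deg_append)

definition hcomp :: "(idx \<Rightarrow> int) \<Rightarrow> ncpoly \<Rightarrow> ncpoly" where
  "hcomp d a = Abs_poly_mapping (\<lambda>k. if wdeg k = d then Poly_Mapping.lookup a k else 0)"

lemma lookup_hcomp: "Poly_Mapping.lookup (hcomp d a) k = (if wdeg k = d then Poly_Mapping.lookup a k else 0)"
proof -
  have "{k. (if wdeg k = d then Poly_Mapping.lookup a k else 0) \<noteq> 0} \<subseteq> {k. Poly_Mapping.lookup a k \<noteq> 0}"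
    by auto
  then have "finite {k. (if wdeg k = d then Poly_Mapping.lookup a k else 0) \<noteq> 0}"
    by (rule finite_subset) simp
  then show ?thesis by (simp add: hcomp_def)
qed

lemma coeff_fun_hcomp: "hom_comp d (coeff_fun a) = coeff_fun (hcomp d a)"
  by (simp add: hom_comp_def coeff_fun_def lookup_hcomp wdeg_def)

lemma hcomp_add: "hcomp d (a + b) = hcomp d a + hcomp d b"
  by (rule poly_mapping_eqI) (simp add: lookup_hcomp Poly_Mapping.lookup_add)

lemma hcomp_zero: "hcomp d 0 = 0"
  by (rule poly_mapping_eqI) (simp add: lookup_hcomp)

lemma hcomp_sum: "hcomp d (\<Sum>k\<in>S. f k) = (\<Sum>k\<in>S. hcomp d (f k))"
  by (induction S rule: infinite_finite_induct) (simp_all add: hcomp_add hcomp_zero)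

lemma hcomp_single:
  "hcomp d (Poly_Mapping.single k c) = (if wdeg k = d then Poly_Mapping.single k c else 0)"
  by (rule poly_mapping_eqI) (auto simp: lookup_hcomp Poly_Mapping.lookup_single when_def)

lemma hcomp_single_mult:
  "hcomp d (Poly_Mapping.single k c * b) = Poly_Mapping.single k c * hcomp (d - wdeg k) b"
proof (induction b rule: poly_mapping_induct)
  case (single l e)
  have iff: "wdeg (k + l) = d \<longleftrightarrow> wdeg l = d - wdeg k"
    unfolding wdeg_add by (auto simp: algebra_simps)
  show ?case
    by (cases "wdeg l = d - wdeg k")
      (simp_all only: Poly_Mapping.mult_single hcomp_single iff if_True if_False mult_zero_right simp_thms)
qed (simp_all add: distrib_left hcomp_add hcomp_zero)

lemma hcomp_mult_single:
  "hcomp d (b * Poly_Mapping.single k c) = hcomp (d - wdeg k) b * Poly_Mapping.single k c"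
proof (induction b rule: poly_mapping_induct)
  case (single l e)
  have iff: "wdeg (l + k) = d \<longleftrightarrow> wdeg l = d - wdeg k"
    unfolding wdeg_add by (auto simp: algebra_simps)
  show ?case
    by (cases "wdeg l = d - wdeg k")
      (simp_all only: Poly_Mapping.mult_single hcomp_single iff if_True if_False mult_zero_left simp_thms)
qed (simp_all add: distrib_right hcomp_add hcomp_zero)

lemma hcomp_decomp: "x = (\<Sum>d\<in>wdeg ` Poly_Mapping.keys x. hcomp d x)"
proof (rule poly_mapping_eqI)
  fix k
  have "Poly_Mapping.lookup (\<Sum>d\<in>wdeg ` Poly_Mapping.keys x. hcomp d x) k
      = (\<Sum>d\<in>wdeg ` Poly_Mapping.keys x. if wdeg k = d then Poly_Mapping.lookup x k else 0)"
    by (simp add: Poly_Mapping.lookup_sum lookup_hcomp)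
  also have "\<dots> = Poly_Mapping.lookup x k"
    by (auto simp: sum.delta in_keys_iff)
  finally show "Poly_Mapping.lookup x k = Poly_Mapping.lookup (\<Sum>d\<in>wdeg ` Poly_Mapping.keys x. hcomp d x) k"
    by simp
qed

definition homogeneous :: "(idx \<Rightarrow> int) \<Rightarrow> ncpoly \<Rightarrow> bool" where
  "homogeneous e a \<longleftrightarrow> (\<forall>k\<in>Poly_Mapping.keys a. wdeg k = e)"

lemma hcomp_homogeneous: "homogeneous e a \<Longrightarrow> hcomp d a = (if d = e then a else 0)"
  by (rule poly_mapping_eqI) (auto simp: lookup_hcomp homogeneous_def in_keys_iff)

lemma homogeneous_hcomp: "homogeneous d (hcomp d x)"
  by (auto simp: homogeneous_def in_keys_iff lookup_hcomp split: if_splits)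

lemma homogeneous_0: "homogeneous e 0"
  by (simp add: homogeneous_def)

lemma homogeneous_add: "homogeneous e a \<Longrightarrow> homogeneous e b \<Longrightarrow> homogeneous e (a + b)"
  using Poly_Mapping.keys_add[of a b] by (auto simp: homogeneous_def)

lemma homogeneous_diff: "homogeneous e a \<Longrightarrow> homogeneous e b \<Longrightarrow> homogeneous e (a - b)"
  using homogeneous_add[of e a "- b"] by (simp add: homogeneous_def)

lemma homogeneous_mult: "homogeneous e a \<Longrightarrow> homogeneous f b \<Longrightarrow> homogeneous (e + f) (a * b)"
  using Poly_Mapping.keys_mult[of a b] by (auto simp: homogeneous_def wdeg_add)

lemma homogeneous_sum: "(\<And>i. i \<in> S \<Longrightarrow> homogeneous e (f i)) \<Longrightarrow> homogeneous e (sum f S)"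
  by (induction S rule: infinite_finite_induct) (simp_all add: homogeneous_add homogeneous_0)

lemma homogeneous_wmon: "homogeneous (word_deg w) (wmon w)"
  by (simp add: homogeneous_def wmon_def wdeg_def)

lemma homogeneous_scalar: "homogeneous 0 (scalar c)"
  by (simp add: homogeneous_def scalar_def wdeg_def zero_word_def word_deg_Nil)

lemma homogeneous_polyH: "homogeneous 0 (polyH r)"
proof -
  have H: "homogeneous 0 H"
    using homogeneous_wmon[of "[G0]"] by (simp add: word_deg_def zero_fun_def)
  have "homogeneous 0 (H ^ n)" for n
    using homogeneous_mult[OF H] homogeneous_wmon[of "[]"]
    by (induction n) (simp_all add: word_deg_Nil)
  then show ?thesis
    unfolding polyH_def peval_def
    by (intro homogeneous_sum) (use homogeneous_mult[OF homogeneous_scalar] in fastforce)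
qed

lemma hcomp_polyH_mult: "hcomp d (polyH r * x) = polyH r * hcomp d x"
proof -
  let ?a = "polyH r"
  have "hcomp d (?a * x)
      = (\<Sum>k\<in>Poly_Mapping.keys ?a. hcomp d (Poly_Mapping.single k (Poly_Mapping.lookup ?a k) * x))"
    by (subst poly_mapping_sum_single[of ?a]) (simp add: sum_distrib_right hcomp_sum)
  also have "\<dots> = (\<Sum>k\<in>Poly_Mapping.keys ?a. Poly_Mapping.single k (Poly_Mapping.lookup ?a k) * hcomp d x)"
    using homogeneous_polyH[of r] by (intro sum.cong) (auto simp: hcomp_single_mult homogeneous_def)
  also have "\<dots> = ?a * hcomp d x"
    by (subst (2) poly_mapping_sum_single[of ?a]) (simp add: sum_distrib_right)
  finally show ?thesis .
qed

lemma ideal_span_graded: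
  assumes "\<And>x. x \<in> S \<Longrightarrow> \<exists>e. homogeneous e x" and "x \<in> ideal_span S"
  shows "hcomp d x \<in> ideal_span S"
proof -
  interpret J: two_sided_ideal "ideal_span S" by (rule two_sided_ideal_span)
  have "two_sided_ideal {x. \<forall>d. hcomp d x \<in> ideal_span S}"
  proof
    fix a c assume a: "a \<in> {x. \<forall>d. hcomp d x \<in> ideal_span S}"
    show "c * a \<in> {x. \<forall>d. hcomp d x \<in> ideal_span S}"
    proof (induction c rule: poly_mapping_induct)
      case (single k e) then show ?case
        using a by (simp add: hcomp_single_mult J.mult_left_mem)
    qed (simp_all add: hcomp_zero J.zero_mem distrib_right hcomp_add J.add_mem)
    show "a * c \<in> {x. \<forall>d. hcomp d x \<in> ideal_span S}"
    proof (induction c rule: poly_mapping_induct)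
      case (single k e) then show ?case
        using a by (simp add: hcomp_mult_single J.mult_right_mem)
    qed (simp_all add: hcomp_zero J.zero_mem distrib_left hcomp_add J.add_mem)
  qed (simp_all add: hcomp_zero J.zero_mem hcomp_add J.add_mem)
  moreover have "S \<subseteq> {x. \<forall>d. hcomp d x \<in> ideal_span S}"
    using assms(1) ideal_span_superset by (fastforce simp: hcomp_homogeneous J.zero_mem)
  ultimately show ?thesis
    using ideal_span_minimal assms(2) by blast
qed

lemma tgwa_relators_homogeneous: "x \<in> tgwa_relators \<alpha> p \<Longrightarrow> \<exists>e. homogeneous e x"
proof -
  have gens: "homogeneous (word_deg [a] + word_deg [b]) (wmon [a] * wmon [b])" for a b
    by (rule homogeneous_mult[OF homogeneous_wmon homogeneous_wmon])
  have "word_deg [XP i] + word_deg [XM i] = 0" "word_deg [XM i] + word_deg [XP i] = 0" for i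
    by (simp_all add: word_deg_def fun_eq_iff)
  then have pair: "homogeneous 0 (Xp i * Xm i)" "homogeneous 0 (Xm i * Xp i)" for i
    using gens[of "XP i" "XM i"] gens[of "XM i" "XP i"] by simp_all
  have commutator: "\<exists>e. homogeneous e (wmon [a] * wmon [b] - wmon [b] * wmon [a])" for a b
    using homogeneous_diff[OF gens[of a b], of "wmon [b] * wmon [a]"] gens[of b a]
    by (metis add.commute)
  have shiftrel: "\<exists>e. homogeneous e (wmon [a] * polyH r - polyH q * wmon [a])" for a r q
  proof -
    have "homogeneous (word_deg [a]) (wmon [a] * polyH r)"
      using homogeneous_mult[OF homogeneous_wmon homogeneous_polyH] by simp
    moreover have "homogeneous (word_deg [a]) (polyH q * wmon [a])"
      using homogeneous_mult[OF homogeneous_polyH homogeneous_wmon] by simp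
    ultimately show ?thesis by (blast intro: homogeneous_diff)
  qed
  have pairrel: "\<exists>e. homogeneous e (Xp i * Xm i - polyH q)"
    "\<exists>e. homogeneous e (Xm i * Xp i - polyH q)" for i q
    using homogeneous_diff[OF pair(1) homogeneous_polyH] homogeneous_diff[OF pair(2) homogeneous_polyH]
    by blast+
  assume "x \<in> tgwa_relators \<alpha> p"
  then show ?thesis unfolding tgwa_relators_def
    by (elim UnE UN_E insertE emptyE) (simp_all only: commutator shiftrel pairrel)
qed

lemma rel_ideal_graded: "x \<in> rel_ideal \<alpha> p \<Longrightarrow> hcomp d x \<in> rel_ideal \<alpha> p"
  unfolding rel_ideal_def by (rule ideal_span_graded[OF tgwa_relators_homogeneous])

section \<open>A representation in which the relations hold\<close>

type_synonym vec = "int \<Rightarrow> int \<Rightarrow> complex poly"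

definition weight :: "(idx \<Rightarrow> complex) \<Rightarrow> int \<Rightarrow> int \<Rightarrow> complex" where
  "weight \<alpha> a b = of_int a * \<alpha> I1 + of_int b * \<alpha> I2"

definition shifted_p :: "(idx \<Rightarrow> complex) \<Rightarrow> (idx \<Rightarrow> complex poly) \<Rightarrow> idx \<Rightarrow> int \<Rightarrow> int \<Rightarrow> complex poly" where
  "shifted_p \<alpha> p i a b = shift (weight \<alpha> a b + \<alpha> i / 2) (p i)"

text \<open>Coordinate \<open>(a, b)\<close> carries a copy of \<open>\<complex>[u]\<close> on which \<open>H\<close> acts as
  \<open>u + a \<alpha>\<^sub>1 + b \<alpha>\<^sub>2\<close>. The generators \<open>X\<^sub>1\<^sup>+\<close> and \<open>X\<^sub>2\<^sup>-\<close> act by pure translations, so that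
  \<open>X\<^sub>1\<^sup>+ X\<^sub>2\<^sup>- = X\<^sub>2\<^sup>- X\<^sub>1\<^sup>+\<close> holds trivially, while
  \<open>X\<^sub>1\<^sup>- X\<^sub>2\<^sup>+ = X\<^sub>2\<^sup>+ X\<^sub>1\<^sup>-\<close> is exactly the hypothesis on \<open>p\<^sub>1, p\<^sub>2\<close>.\<close>
fun gen_act :: "(idx \<Rightarrow> complex) \<Rightarrow> (idx \<Rightarrow> complex poly) \<Rightarrow> gen \<Rightarrow> vec \<Rightarrow> vec" where
  "gen_act \<alpha> p G0 v = (\<lambda>a b. [:weight \<alpha> a b, 1:] * v a b)"
| "gen_act \<alpha> p (XP I1) v = (\<lambda>a b. v (a - 1) b)"
| "gen_act \<alpha> p (XM I1) v = (\<lambda>a b. shifted_p \<alpha> p I1 a b * v (a + 1) b)"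
| "gen_act \<alpha> p (XP I2) v = (\<lambda>a b. shifted_p \<alpha> p I2 a (b - 1) * v a (b - 1))"
| "gen_act \<alpha> p (XM I2) v = (\<lambda>a b. v a (b + 1))"

lemma gen_exhaust [case_names G0 XP1 XM1 XP2 XM2]:
  "(g = G0 \<Longrightarrow> P) \<Longrightarrow> (g = XP I1 \<Longrightarrow> P) \<Longrightarrow> (g = XM I1 \<Longrightarrow> P) \<Longrightarrow>
   (g = XP I2 \<Longrightarrow> P) \<Longrightarrow> (g = XM I2 \<Longrightarrow> P) \<Longrightarrow> P"
  by (metis gen.exhaust idx.exhaust)

definition vsmult :: "complex \<Rightarrow> vec \<Rightarrow> vec" where
  "vsmult c v = (\<lambda>a b. smult c (v a b))"

lemma gen_act_linear:
  "gen_act \<alpha> p g (v + w) = gen_act \<alpha> p g v + gen_act \<alpha> p g w"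
  "gen_act \<alpha> p g (vsmult c v) = vsmult c (gen_act \<alpha> p g v)"
  "gen_act \<alpha> p g 0 = 0"
  by (cases g rule: gen_exhaust; simp add: vsmult_def fun_eq_iff distrib_left)+

lemma word_act_linear:
  "foldr (gen_act \<alpha> p) w (v + v') = foldr (gen_act \<alpha> p) w v + foldr (gen_act \<alpha> p) w v'"
  "foldr (gen_act \<alpha> p) w (vsmult c v) = vsmult c (foldr (gen_act \<alpha> p) w v)"
  "foldr (gen_act \<alpha> p) w 0 = 0"
  by (induction w) (simp_all add: gen_act_linear)

definition act :: "(idx \<Rightarrow> complex) \<Rightarrow> (idx \<Rightarrow> complex poly) \<Rightarrow> ncpoly \<Rightarrow> vec \<Rightarrow> vec" where
  "act \<alpha> p x v = (\<lambda>a b. \<Sum>k\<in>Poly_Mapping.keys x.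
      smult (Poly_Mapping.lookup x k) (foldr (gen_act \<alpha> p) (letters k) v a b))"

lemma act_add: "act \<alpha> p (x + y) v = act \<alpha> p x v + act \<alpha> p y v"
  unfolding act_def plus_fun_def
  by (intro ext, rule setsum_keys_plus_distrib) (simp_all add: smult_add_left)

lemma act_zero: "act \<alpha> p 0 v = 0"
  by (simp add: act_def fun_eq_iff)

lemma act_single: "act \<alpha> p (Poly_Mapping.single k c) v = vsmult c (foldr (gen_act \<alpha> p) (letters k) v)"
  by (cases "c = 0") (simp_all add: act_def vsmult_def fun_eq_iff Poly_Mapping.lookup_single)

lemma act_linear:
  "act \<alpha> p x (v + w) = act \<alpha> p x v + act \<alpha> p x w"
  "act \<alpha> p x (vsmult c v) = vsmult c (act \<alpha> p x v)"
  "act \<alpha> p x 0 = 0"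
proof -
  have "smult c (sum f S) = (\<Sum>k\<in>S. smult c (f k))" for c and f :: "word \<Rightarrow> complex poly" and S
    using sum_distrib_left[of "[:c:]" f S] by simp
  then show "act \<alpha> p x (v + w) = act \<alpha> p x v + act \<alpha> p x w"
    "act \<alpha> p x (vsmult c v) = vsmult c (act \<alpha> p x v)" "act \<alpha> p x 0 = 0"
    unfolding act_def word_act_linear
    by (simp_all add: fun_eq_iff vsmult_def sum.distrib smult_add_right mult.commute)
qed

lemma act_mult: "act \<alpha> p (x * y) v = act \<alpha> p x (act \<alpha> p y v)"
proof (induction x arbitrary: v rule: poly_mapping_induct)
  case (single k c)
  show ?case
  proof (induction y arbitrary: v rule: poly_mapping_induct)
    case (single l d)
    show ?case
      by (simp add: Poly_Mapping.mult_single act_single word_act_linear) (simp add: vsmult_def)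
  qed (simp_all add: act_zero act_linear distrib_left act_add)
qed (simp_all add: act_zero distrib_right act_add)

lemma act_wmon: "act \<alpha> p (wmon w) v = foldr (gen_act \<alpha> p) w v"
  by (simp add: wmon_def act_single vsmult_def)

lemma act_scalar: "act \<alpha> p (scalar c) v = vsmult c v"
  by (simp add: scalar_def act_single zero_word_def)

lemma act_diff: "act \<alpha> p (x - y) v = act \<alpha> p x v - act \<alpha> p y v"
proof -
  have "x - y = x + scalar (- 1) * y" by (simp add: scalar_uminus)
  then show ?thesis
    by (simp only: act_add act_mult act_scalar) (simp add: vsmult_def fun_eq_iff)
qed

lemma act_polyH: "act \<alpha> p (polyH r) v = (\<lambda>a b. shift (weight \<alpha> a b) r * v a b)"
proof (induction r arbitrary: v)
  case (pCons c r)
  have "polyH (pCons c r) = scalar c + H * polyH r"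
    by (simp add: polyH_def peval_pCons)
  then show ?case using pCons.IH
    by (simp add: act_add act_mult act_scalar act_wmon vsmult_def fun_eq_iff shift_def
        pcompose_pCons algebra_simps)
qed (simp add: polyH_def act_zero shift_def fun_eq_iff)

definition rep_kernel :: "(idx \<Rightarrow> complex) \<Rightarrow> (idx \<Rightarrow> complex poly) \<Rightarrow> ncpoly set" where
  "rep_kernel \<alpha> p = {x. \<forall>v. act \<alpha> p x v = 0}"

lemma two_sided_ideal_rep_kernel: "two_sided_ideal (rep_kernel \<alpha> p)"
  by unfold_locales (simp_all add: rep_kernel_def act_zero act_add act_mult act_linear)

lemma diff_in_rep_kernel:
  "(\<And>v a b. act \<alpha> p x v a b = act \<alpha> p y v a b) \<Longrightarrow> x - y \<in> rep_kernel \<alpha> p"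
  by (simp add: rep_kernel_def act_diff fun_eq_iff)

lemma act_gen_mult: "act \<alpha> p (wmon [g] * y) v = gen_act \<alpha> p g (act \<alpha> p y v)"
  by (simp add: act_mult act_wmon)

lemma act_polyH_mult: "act \<alpha> p (polyH r * y) v a b = shift (weight \<alpha> a b) r * act \<alpha> p y v a b"
  by (simp add: act_mult act_polyH)

lemma weight_step:
  "weight \<alpha> (a - 1) b = weight \<alpha> a b + - \<alpha> I1" "weight \<alpha> (a + 1) b = weight \<alpha> a b + \<alpha> I1"
  "weight \<alpha> a (b - 1) = weight \<alpha> a b + - \<alpha> I2" "weight \<alpha> a (b + 1) = weight \<alpha> a b + \<alpha> I2"
  by (simp_all add: weight_def algebra_simps)

lemma act_Xm1_Xp2_commute:
  assumes compat: "shift (\<alpha> I2 / 2) (p I1) * shift (\<alpha> I1 / 2) (p I2)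
         = shift (- \<alpha> I2 / 2) (p I1) * shift (- \<alpha> I1 / 2) (p I2)"
  shows "act \<alpha> p (Xm I1 * Xp I2) v a b = act \<alpha> p (Xp I2 * Xm I1) v a b"
proof -
  define w where "w = weight \<alpha> a b + \<alpha> I1 / 2 - \<alpha> I2 / 2"
  have "shift w (shift (\<alpha> I2 / 2) (p I1) * shift (\<alpha> I1 / 2) (p I2))
      = shift w (shift (- \<alpha> I2 / 2) (p I1) * shift (- \<alpha> I1 / 2) (p I2))"
    by (simp only: compat)
  then have "shift (w + \<alpha> I2 / 2) (p I1) * shift (w + \<alpha> I1 / 2) (p I2)
      = shift (w + - \<alpha> I2 / 2) (p I1) * shift (w + - \<alpha> I1 / 2) (p I2)"
    by (simp only: shift_mult shift_shift)
  moreover have "shifted_p \<alpha> p I1 a b = shift (w + \<alpha> I2 / 2) (p I1)"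
    "shifted_p \<alpha> p I2 (a + 1) (b - 1) = shift (w + \<alpha> I1 / 2) (p I2)"
    "shifted_p \<alpha> p I1 a (b - 1) = shift (w + - \<alpha> I2 / 2) (p I1)"
    "shifted_p \<alpha> p I2 a (b - 1) = shift (w + - \<alpha> I1 / 2) (p I2)"
    by (simp_all add: shifted_p_def w_def weight_def algebra_simps)
  ultimately show ?thesis
    by (simp add: act_gen_mult act_wmon mult.assoc[symmetric])
qed

lemma tgwa_relators_subset_rep_kernel:
  assumes compat: "shift (\<alpha> I2 / 2) (p I1) * shift (\<alpha> I1 / 2) (p I2)
         = shift (- \<alpha> I2 / 2) (p I1) * shift (- \<alpha> I1 / 2) (p I2)"
  shows "tgwa_relators \<alpha> p \<subseteq> rep_kernel \<alpha> p"
proof -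
  note act_simps = act_gen_mult act_polyH_mult act_polyH act_wmon foldr.simps o_apply gen_act.simps
  have shift_p: "Xp i * polyH r - polyH (shift (- \<alpha> i) r) * Xp i \<in> rep_kernel \<alpha> p" for i r
    by (cases i; intro diff_in_rep_kernel; simp add: act_simps weight_step shift_shift mult_ac)
  have shift_m: "Xm i * polyH r - polyH (shift (\<alpha> i) r) * Xm i \<in> rep_kernel \<alpha> p" for i r
    by (cases i; intro diff_in_rep_kernel; simp add: act_simps weight_step shift_shift mult_ac)
  have pair: "Xp i * Xm i - polyH (shift (- \<alpha> i / 2) (p i)) \<in> rep_kernel \<alpha> p"
    "Xm i * Xp i - polyH (shift (\<alpha> i / 2) (p i)) \<in> rep_kernel \<alpha> p" for i
    by (cases i; intro diff_in_rep_kernel; simp add: act_simps shifted_p_def weight_step shift_shift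
        field_simps)+
  have cross1: "act \<alpha> p (Xp I1 * Xm I2) v a b = act \<alpha> p (Xm I2 * Xp I1) v a b" for v a b
    by (simp add: act_simps)
  have cross: "Xp I1 * Xm I2 - Xm I2 * Xp I1 \<in> rep_kernel \<alpha> p"
    "Xm I2 * Xp I1 - Xp I1 * Xm I2 \<in> rep_kernel \<alpha> p"
    "Xm I1 * Xp I2 - Xp I2 * Xm I1 \<in> rep_kernel \<alpha> p"
    "Xp I2 * Xm I1 - Xm I1 * Xp I2 \<in> rep_kernel \<alpha> p"
    by (intro diff_in_rep_kernel; simp only: cross1 act_Xm1_Xp2_commute[OF compat])+
  show ?thesis
  proof
    fix x assume "x \<in> tgwa_relators \<alpha> p"
    then show "x \<in> rep_kernel \<alpha> p"
      unfolding tgwa_relators_def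
      by (elim UnE UN_E insertE emptyE) (simp_all only: shift_p shift_m pair cross)
  qed
qed

lemma polyH_in_rel_ideal:
  assumes compat: "shift (\<alpha> I2 / 2) (p I1) * shift (\<alpha> I1 / 2) (p I2)
         = shift (- \<alpha> I2 / 2) (p I1) * shift (- \<alpha> I1 / 2) (p I2)"
    and "polyH r \<in> rel_ideal \<alpha> p"
  shows "r = 0"
proof -
  have "rel_ideal \<alpha> p \<subseteq> rep_kernel \<alpha> p"
    unfolding rel_ideal_def
    by (rule ideal_span_minimal[OF two_sided_ideal_rep_kernel tgwa_relators_subset_rep_kernel[OF compat]])
  then have "act \<alpha> p (polyH r) (\<lambda>a b. if a = 0 \<and> b = 0 then 1 else 0) 0 0 = 0"
    using assms(2) by (auto simp: rep_kernel_def)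
  then show ?thesis by (simp add: act_polyH weight_def)
qed

section \<open>Words of degree zero\<close>

lemma split_list_opposite:
  assumes "\<exists>x\<in>set xs. P x" and "\<exists>y\<in>set xs. Q y" and "\<And>x. \<not> (P x \<and> Q x)"
  shows "\<exists>u a m b v. xs = u @ a # m @ b # v \<and> (P a \<and> Q b \<or> Q a \<and> P b)
           \<and> (\<forall>c\<in>set m. \<not> P c \<and> \<not> Q c)"
  using assms(1,2)
proof (induction xs)
  case (Cons x xs)
  show ?case
  proof (cases "(\<exists>x\<in>set xs. P x) \<and> (\<exists>y\<in>set xs. Q y)")
    case True
    then obtain u a m b v where "xs = u @ a # m @ b # v" "P a \<and> Q b \<or> Q a \<and> P b"
      "\<forall>c\<in>set m. \<not> P c \<and> \<not> Q c"
      using Cons.IH by blast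
    then show ?thesis by (metis append_Cons)
  next
    case False
    with Cons.prems assms(3) have "P x \<and> (\<exists>y\<in>set xs. Q y) \<or> Q x \<and> (\<exists>y\<in>set xs. P y)"
      by auto
    then obtain b m v where "xs = m @ b # v" "P x \<and> Q b \<or> Q x \<and> P b"
      "\<forall>c\<in>set m. \<not> P c \<and> \<not> Q c"
      using False split_list_first_prop[of xs "\<lambda>c. P c \<or> Q c"] by fastforce
    then show ?thesis by (metis append_Nil)
  qed
qed simp

lemma constant_or_adjacent:
  assumes "set m \<subseteq> {a, b}"
  shows "(\<exists>z k. z \<in> {a, b} \<and> m = replicate k z) \<or>
         (\<exists>u v. m = u @ [a, b] @ v \<or> m = u @ [b, a] @ v)"
  using assms
proof (induction m)
  case (Cons c m)
  then consider z k where "z \<in> {a, b}" "m = replicate k z" | u v where "m = u @ [a, b] @ v \<or> m = u @ [b, a] @ v"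
    by auto
  then show ?case
  proof cases
    case (1 z k)
    have c: "c \<in> {a, b}" using Cons.prems by simp
    consider "k = 0" | "c = z" | k' where "k = Suc k'" "c \<noteq> z"
      by (cases k) auto
    then show ?thesis
    proof cases
      case 1
      then have "c # m = replicate 1 c" using \<open>m = replicate k z\<close> by simp
      then show ?thesis using c by blast
    next
      case 2
      then have "c # m = replicate (Suc k) z" using \<open>m = replicate k z\<close> by simp
      then show ?thesis using 1 by blast
    next
      case 3
      then have "c # m = [] @ [c, z] @ replicate k' z" using \<open>m = replicate k z\<close> by simp
      moreover have "c = a \<and> z = b \<or> c = b \<and> z = a" using c 1 3 by auto
      ultimately show ?thesis by blast
    qed
  next
    case 2 then show ?thesis by (metis append_Cons)
  qed
qed auto

definition opposite :: "gen \<Rightarrow> gen \<Rightarrow> bool" where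
  "opposite a b \<longleftrightarrow> (\<exists>i. a = XP i \<and> b = XM i \<or> a = XM i \<and> b = XP i)"

definition commutes_across :: "gen \<Rightarrow> gen \<Rightarrow> bool" where
  "commutes_across x z \<longleftrightarrow> x = XP I1 \<and> z = XM I2 \<or> x = XM I1 \<and> z = XP I2"

lemma word_deg_count:
  "word_deg w j = int (count_list w (XP j)) - int (count_list w (XM j))"
proof (induction w)
  case (Cons a w) then show ?case
    by (cases a rule: gen_exhaust; cases j) (simp_all add: word_deg_Cons)
qed (simp add: word_deg_Nil)

lemma word_deg_zero_letters:
  assumes "word_deg w = 0"
  shows "XP j \<in> set w \<longleftrightarrow> XM j \<in> set w"
proof -
  have "count_list w (XP j) = count_list w (XM j)"
    using assms word_deg_count[of w j] by simp
  then show ?thesis by (metis count_list_0_iff)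
qed

definition reducible_pattern :: "gen list \<Rightarrow> bool" where
  "reducible_pattern w \<longleftrightarrow> (\<exists>u a b v. w = u @ [a, b] @ v \<and> opposite a b) \<or>
     (\<exists>u x k z y v. w = u @ [x] @ replicate k z @ [y] @ v \<and> opposite x y
        \<and> (commutes_across x z \<or> commutes_across y z))"

lemma reducible_pattern_X1:
  assumes "set w \<subseteq> {XP I1, XM I1, XP I2, XM I2}" and "XP I1 \<in> set w" and "XM I1 \<in> set w"
  shows "reducible_pattern w"
proof -
  obtain u x m y v where w: "w = u @ x # m @ y # v"
    and xy: "x = XP I1 \<and> y = XM I1 \<or> x = XM I1 \<and> y = XP I1"
    and m: "\<forall>c\<in>set m. c \<noteq> XP I1 \<and> c \<noteq> XM I1"
    using split_list_opposite[of w "\<lambda>c. c = XP I1" "\<lambda>c. c = XM I1"] assms(2,3) by auto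
  have "set m \<subseteq> {XP I2, XM I2}" using m assms(1) w by auto
  from constant_or_adjacent[OF this] consider
      (block) z k where "z \<in> {XP I2, XM I2}" "m = replicate k z"
    | (pair) u' v' where "m = u' @ [XP I2, XM I2] @ v' \<or> m = u' @ [XM I2, XP I2] @ v'"
    by blast
  then show ?thesis
  proof cases
    case (block z k)
    then have "w = u @ [x] @ replicate k z @ [y] @ v \<and> opposite x y
        \<and> (commutes_across x z \<or> commutes_across y z)"
      using w xy by (auto simp: opposite_def commutes_across_def)
    then show ?thesis unfolding reducible_pattern_def by blast
  next
    case (pair u' v')
    then have "\<exists>a b. w = (u @ x # u') @ [a, b] @ (v' @ y # v) \<and> opposite a b"
      using w by (auto simp: opposite_def)
    then show ?thesis unfolding reducible_pattern_def by blast
  qed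
qed

lemma degree_zero_word_pattern:
  assumes "G0 \<notin> set w" and "word_deg w = 0" and "w \<noteq> []"
  shows "reducible_pattern w"
proof -
  have both: "XP j \<in> set w \<longleftrightarrow> XM j \<in> set w" for j
    using word_deg_zero_letters[OF assms(2)] .
  have letters: "set w \<subseteq> {XP I1, XM I1, XP I2, XM I2}"
  proof
    fix c assume "c \<in> set w"
    then show "c \<in> {XP I1, XM I1, XP I2, XM I2}" using assms(1) by (cases c rule: gen_exhaust) auto
  qed
  show ?thesis
  proof (cases "XP I1 \<in> set w")
    case True
    then show ?thesis using reducible_pattern_X1[OF letters] both by blast
  next
    case False
    obtain c where "c \<in> set w" using assms(3) by (cases w) auto
    then have "XP I2 \<in> set w"
      using False both letters by blast
    then obtain u a m b v where w: "w = u @ a # m @ b # v"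
      and ab: "a = XP I2 \<and> b = XM I2 \<or> a = XM I2 \<and> b = XP I2"
      and m: "\<forall>c\<in>set m. c \<noteq> XP I2 \<and> c \<noteq> XM I2"
      using split_list_opposite[of w "\<lambda>c. c = XP I2" "\<lambda>c. c = XM I2"] both by auto
    have "m = []" using m letters w False both by (cases m) auto
    then show ?thesis using w ab by (auto simp: opposite_def reducible_pattern_def)
  qed
qed

lemma word_deg_opposite: "opposite a b \<Longrightarrow> word_deg [a, b] = 0"
  by (auto simp: opposite_def word_deg_def fun_eq_iff)

lemma wmon_pair: "wmon [a, b] = wmon [a] * wmon [b]"
  using wmon_append[of "[a]" "[b]"] by simp

lemma pair_relation:
  "wmon [XP i, XM i] - polyH (shift (- \<alpha> i / 2) (p i)) \<in> rel_ideal \<alpha> p"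
  "wmon [XM i, XP i] - polyH (shift (\<alpha> i / 2) (p i)) \<in> rel_ideal \<alpha> p"
  unfolding wmon_pair by (intro tgwa_relator_mem, auto simp: tgwa_relators_def)+

lemma opposite_pair: "opposite a b \<Longrightarrow> \<exists>q. wmon [a, b] - polyH q \<in> rel_ideal \<alpha> p"
  unfolding opposite_def using pair_relation by blast

lemma insert_polyH:
  assumes "wmon m - polyH q \<in> rel_ideal \<alpha> p" and "wmon (u @ v) - polyH r \<in> rel_ideal \<alpha> p"
  shows "wmon (u @ m @ v) - polyH (shift (word_shift \<alpha> u) q * r) \<in> rel_ideal \<alpha> p"
proof -
  let ?q = "shift (word_shift \<alpha> u) q"
  have "wmon u * wmon m * wmon v - wmon u * polyH q * wmon v \<in> rel_ideal \<alpha> p"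
    by (rule rel_ideal.diff_cong[OF assms(1)])
  moreover have "wmon u * polyH q * wmon v - polyH ?q * wmon (u @ v) * 1 \<in> rel_ideal \<alpha> p"
  proof -
    have "wmon u * polyH q * wmon v - polyH ?q * wmon (u @ v) * 1
        = (wmon u * polyH q - polyH ?q * wmon u) * wmon v"
      by (simp add: wmon_append algebra_simps)
    then show ?thesis using rel_ideal.mult_right_mem[OF wmon_polyH] by simp
  qed
  ultimately have "wmon u * wmon m * wmon v - polyH ?q * wmon (u @ v) * 1 \<in> rel_ideal \<alpha> p"
    by (rule rel_ideal.diff_trans)
  then have "wmon u * wmon m * wmon v - polyH ?q * polyH r * 1 \<in> rel_ideal \<alpha> p"
    by (rule rel_ideal.diff_trans[OF _ rel_ideal.diff_cong[OF assms(2)]])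
  then show ?thesis by (simp add: wmon_append polyH_mult mult.assoc)
qed

lemma wmon_diff_cong:
  "wmon s - wmon t \<in> rel_ideal \<alpha> p \<Longrightarrow> wmon (u @ s @ v) - wmon (u @ t @ v) \<in> rel_ideal \<alpha> p"
  using rel_ideal.diff_cong[of "wmon s" "wmon t" \<alpha> p "wmon u" "wmon v"]
  by (simp add: wmon_append mult.assoc)

lemma commute_block:
  assumes "commutes_across x z"
  shows "wmon (x # replicate k z) - wmon (replicate k z @ [x]) \<in> rel_ideal \<alpha> p"
proof -
  have "wmon [x] * wmon [z] - wmon [z] * wmon [x] \<in> rel_ideal \<alpha> p"
    using assms by (auto intro!: tgwa_relator_mem simp: commutes_across_def tgwa_relators_def)
  then have "wmon [x] * wmon [z] ^ k - wmon [z] ^ k * wmon [x] \<in> rel_ideal \<alpha> p"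
    by (rule rel_ideal.commute_power)
  then show ?thesis
    by (simp add: wmon_append[symmetric] wmon_replicate[symmetric] replicate_append_same)
qed

lemma block_congruent_to_pair:
  assumes "commutes_across x z \<or> commutes_across y z"
  shows "\<exists>u' v'. u' @ v' = u @ replicate k z @ v \<and>
           wmon (u @ [x] @ replicate k z @ [y] @ v) - wmon (u' @ [x, y] @ v') \<in> rel_ideal \<alpha> p"
  using assms
proof
  assume "commutes_across x z"
  then have "wmon (x # replicate k z) - wmon (replicate k z @ [x]) \<in> rel_ideal \<alpha> p"
    by (rule commute_block)
  then have "wmon (u @ (x # replicate k z) @ (y # v)) - wmon (u @ (replicate k z @ [x]) @ (y # v))
      \<in> rel_ideal \<alpha> p"
    by (rule wmon_diff_cong)
  then show ?thesis by (intro exI[of _ "u @ replicate k z"] exI[of _ v]) simp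
next
  assume "commutes_across y z"
  then have "wmon (replicate k z @ [y]) - wmon (y # replicate k z) \<in> rel_ideal \<alpha> p"
    by (rule rel_ideal.diff_sym[OF commute_block])
  then have "wmon ((u @ [x]) @ (replicate k z @ [y]) @ v) - wmon ((u @ [x]) @ (y # replicate k z) @ v)
      \<in> rel_ideal \<alpha> p"
    by (rule wmon_diff_cong)
  then show ?thesis by (intro exI[of _ u] exI[of _ "replicate k z @ v"]) simp
qed

lemma nonempty_word_reducible:
  assumes "word_deg w = 0" and "w \<noteq> []"
  shows "\<exists>u m v. wmon w - wmon (u @ m @ v) \<in> rel_ideal \<alpha> p \<and> (\<exists>q. wmon m - polyH q \<in> rel_ideal \<alpha> p)
           \<and> length (u @ v) < length w \<and> word_deg (u @ v) = 0"
proof (cases "G0 \<in> set w")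
  case True
  then obtain u v where w: "w = u @ [G0] @ v" by (metis split_list append_Cons append_Nil)
  have "wmon [G0] - polyH [:0, 1:] \<in> rel_ideal \<alpha> p"
    by (simp add: polyH_X rel_ideal.zero_mem)
  moreover have "word_deg (u @ v) = 0"
    using assms(1) unfolding w by (simp add: word_deg_append word_deg_Cons zero_fun_def plus_fun_def)
  ultimately show ?thesis
    using w rel_ideal.zero_mem by (intro exI[of _ u] exI[of _ "[G0]"] exI[of _ v]) auto
next
  case False
  from degree_zero_word_pattern[OF False assms] consider
      (adjacent) u a b v where "w = u @ [a, b] @ v" "opposite a b"
    | (block) u x k z y v where "w = u @ [x] @ replicate k z @ [y] @ v" "opposite x y"
        "commutes_across x z \<or> commutes_across y z"
    unfolding reducible_pattern_def by blast
  then show ?thesis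
  proof cases
    case (adjacent u a b v)
    have "word_deg w = word_deg (u @ v) + word_deg [a, b]"
      unfolding adjacent(1) by (simp only: word_deg_append add_ac)
    then have "word_deg (u @ v) = 0"
      using assms(1) word_deg_opposite[OF adjacent(2)] by simp
    then show ?thesis
      using adjacent opposite_pair[OF adjacent(2)] rel_ideal.zero_mem
      by (intro exI[of _ u] exI[of _ "[a, b]"] exI[of _ v]) simp
  next
    case (block u x k z y v)
    obtain u' v' where uv: "u' @ v' = u @ replicate k z @ v"
      and congr: "wmon w - wmon (u' @ [x, y] @ v') \<in> rel_ideal \<alpha> p"
      using block_congruent_to_pair[OF block(3)] block(1) by blast
    have "word_deg w = word_deg (u' @ v') + word_deg [x, y]"
      unfolding block(1) uv by (simp add: word_deg_append word_deg_Cons word_deg_Nil add_ac)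
    then have "word_deg (u' @ v') = 0"
      using assms(1) word_deg_opposite[OF block(2)] by simp
    moreover have "length (u' @ v') < length w"
      using block(1) arg_cong[OF uv, of length] by simp
    ultimately show ?thesis
      using congr opposite_pair[OF block(2)] by blast
  qed
qed

lemma degree_zero_reduces: "word_deg w = 0 \<Longrightarrow> \<exists>r. wmon w - polyH r \<in> rel_ideal \<alpha> p"
proof (induction "length w" arbitrary: w rule: less_induct)
  case less
  show ?case
  proof (cases "w = []")
    case True then show ?thesis using rel_ideal.zero_mem by (metis polyH_1 right_minus_eq wmon_Nil)
  next
    case False
    then obtain u m v q where congr: "wmon w - wmon (u @ m @ v) \<in> rel_ideal \<alpha> p"
      and q: "wmon m - polyH q \<in> rel_ideal \<alpha> p"
      and shorter: "length (u @ v) < length w" and deg: "word_deg (u @ v) = 0"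
      using nonempty_word_reducible[OF less.prems] by blast
    obtain r where "wmon (u @ v) - polyH r \<in> rel_ideal \<alpha> p"
      using less.hyps[OF shorter deg] by blast
    then show ?thesis using rel_ideal.diff_trans[OF congr insert_polyH[OF q]] by blast
  qed
qed

lemma homogeneous_zero_reduces:
  assumes "homogeneous 0 z"
  shows "\<exists>r. z - polyH r \<in> rel_ideal \<alpha> p"
proof -
  have "\<exists>r. wmon (letters k) - polyH r \<in> rel_ideal \<alpha> p" if "k \<in> Poly_Mapping.keys z" for k
    using that assms by (intro degree_zero_reduces) (simp add: homogeneous_def wdeg_def)
  then obtain R where R: "\<And>k. k \<in> Poly_Mapping.keys z \<Longrightarrow> wmon (letters k) - polyH (R k) \<in> rel_ideal \<alpha> p"
    by metis
  have "z - polyH (\<Sum>k\<in>Poly_Mapping.keys z. smult (Poly_Mapping.lookup z k) (R k))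
      = (\<Sum>k\<in>Poly_Mapping.keys z. scalar (Poly_Mapping.lookup z k) * (wmon (letters k) - polyH (R k)))"
    by (subst (1) poly_mapping_sum_single[of z])
      (simp add: polyH_sum polyH_smult single_eq_scalar_wmon sum_subtractf right_diff_distrib)
  also have "\<dots> \<in> rel_ideal \<alpha> p"
    by (intro rel_ideal.sum_mem rel_ideal.mult_left_mem R)
  finally show ?thesis by blast
qed

section \<open>The largest graded ideal meeting \<open>\<complex>[H]\<close> only in the relations\<close>

fun opp_gen :: "gen \<Rightarrow> gen" where
  "opp_gen G0 = G0"
| "opp_gen (XP i) = XM i"
| "opp_gen (XM i) = XP i"

lemma opposite_word_product:
  assumes "p I1 \<noteq> 0" and "p I2 \<noteq> 0" and "G0 \<notin> set u"
  shows "\<exists>g. g \<noteq> 0 \<and> wmon (rev (map opp_gen u)) * wmon u - polyH g \<in> rel_ideal \<alpha> p"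
  using assms(3)
proof (induction u)
  case Nil then show ?case by (intro exI[of _ 1]) (simp add: rel_ideal.zero_mem)
next
  case (Cons a u)
  obtain g where g: "g \<noteq> 0" "wmon (rev (map opp_gen u)) * wmon u - polyH g \<in> rel_ideal \<alpha> p"
    using Cons by auto
  have nz: "p i \<noteq> 0" for i using assms(1,2) by (cases i) auto
  have "\<exists>q. q \<noteq> 0 \<and> wmon [opp_gen a, a] - polyH q \<in> rel_ideal \<alpha> p"
  proof (cases a)
    case (XP i) then show ?thesis
      using pair_relation(2)[of i \<alpha> p] nz[of i] by (intro exI[of _ "shift (\<alpha> i / 2) (p i)"]) simp
  next
    case (XM i) then show ?thesis
      using pair_relation(1)[of i \<alpha> p] nz[of i] by (intro exI[of _ "shift (- \<alpha> i / 2) (p i)"]) simp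
  qed (use Cons.prems in simp)
  then obtain q where q: "q \<noteq> 0" "wmon [opp_gen a, a] - polyH q \<in> rel_ideal \<alpha> p"
    by blast
  let ?R = "rev (map opp_gen u)"
  let ?q = "shift (word_shift \<alpha> ?R) q"
  have "wmon (rev (map opp_gen (a # u))) * wmon (a # u) - polyH (?q * g)
    = wmon ?R * (wmon [opp_gen a, a] - polyH q) * wmon u + (wmon ?R * polyH q - polyH ?q * wmon ?R) * wmon u
      + polyH ?q * (wmon ?R * wmon u - polyH g)"
    by (simp add: wmon_append[symmetric] polyH_mult algebra_simps)
      (simp add: wmon_append polyH_commute)
  also have "\<dots> \<in> rel_ideal \<alpha> p"
    by (intro rel_ideal.add_mem rel_ideal.mult_right_mem rel_ideal.mult_left_mem q(2) wmon_polyH g(2))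
  finally show ?case using q(1) g(1) by (intro exI[of _ "?q * g"]) simp
qed

definition lowering_word :: "(idx \<Rightarrow> int) \<Rightarrow> gen list" where
  "lowering_word d = replicate (nat \<bar>d I1\<bar>) (if d I1 \<ge> 0 then XM I1 else XP I1)
                   @ replicate (nat \<bar>d I2\<bar>) (if d I2 \<ge> 0 then XM I2 else XP I2)"

lemma word_deg_lowering_word: "word_deg (lowering_word d) = - d"
proof
  fix j show "word_deg (lowering_word d) j = (- d) j"
    by (cases j) (auto simp: lowering_word_def word_deg_append word_deg_replicate)
qed

lemma G0_notin_lowering_word: "G0 \<notin> set (lowering_word d)"
  by (auto simp: lowering_word_def split: if_splits)

definition admissible :: "(idx \<Rightarrow> complex) \<Rightarrow> (idx \<Rightarrow> complex poly) \<Rightarrow> ncpoly set \<Rightarrow> bool" where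
  "admissible \<alpha> p X \<longleftrightarrow> two_sided_ideal X \<and> rel_ideal \<alpha> p \<subseteq> X \<and> (\<forall>a\<in>X. \<forall>d. hcomp d a \<in> X) \<and>
                          (\<forall>r. polyH r \<in> X \<longrightarrow> polyH r \<in> rel_ideal \<alpha> p)"

lemma admissible_subset_torsion:
  assumes "p I1 \<noteq> 0" and "p I2 \<noteq> 0" and "admissible \<alpha> p X"
  shows "X \<subseteq> torsion \<alpha> p"
proof -
  interpret X: two_sided_ideal X using assms(3) by (simp add: admissible_def)
  have homogeneous_in_torsion: "y \<in> torsion \<alpha> p" if y: "y \<in> X" "homogeneous d y" for y d
  proof -
    let ?M = "wmon (lowering_word d)" and ?M' = "wmon (rev (map opp_gen (lowering_word d)))"
    have "homogeneous 0 (?M * y)"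
      using homogeneous_mult[OF homogeneous_wmon y(2), of "lowering_word d"]
      by (simp add: word_deg_lowering_word)
    then obtain r where r: "?M * y - polyH r \<in> rel_ideal \<alpha> p"
      using homogeneous_zero_reduces by blast
    have "?M * y - polyH r \<in> X" using r assms(3) by (auto simp: admissible_def)
    then have "?M * y - (?M * y - polyH r) \<in> X" by (rule X.diff_mem[OF X.mult_left_mem[OF y(1)]])
    then have "polyH r \<in> rel_ideal \<alpha> p" using assms(3) by (auto simp: admissible_def)
    then have My: "?M * y \<in> rel_ideal \<alpha> p" using rel_ideal.add_mem[OF r] by fastforce
    obtain g where g: "g \<noteq> 0" "?M' * ?M - polyH g \<in> rel_ideal \<alpha> p"
      using opposite_word_product[OF assms(1,2) G0_notin_lowering_word] by blast
    have "polyH g * y = ?M' * (?M * y) - (?M' * ?M - polyH g) * y"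
      by (simp add: algebra_simps)
    also have "\<dots> \<in> rel_ideal \<alpha> p"
      by (intro rel_ideal.diff_mem rel_ideal.mult_left_mem rel_ideal.mult_right_mem My g(2))
    finally show ?thesis using g(1) unfolding torsion_def by blast
  qed
  show ?thesis
  proof
    fix x assume "x \<in> X"
    then have "(\<Sum>d\<in>wdeg ` Poly_Mapping.keys x. hcomp d x) \<in> torsion \<alpha> p"
      using assms(3) homogeneous_hcomp
      by (intro torsion.sum_mem homogeneous_in_torsion) (auto simp: admissible_def)
    then show "x \<in> torsion \<alpha> p" using hcomp_decomp[of x] by simp
  qed
qed

lemma admissible_torsion:
  assumes compat: "shift (\<alpha> I2 / 2) (p I1) * shift (\<alpha> I1 / 2) (p I2)
         = shift (- \<alpha> I2 / 2) (p I1) * shift (- \<alpha> I1 / 2) (p I2)"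
  shows "admissible \<alpha> p (torsion \<alpha> p)"
  unfolding admissible_def
proof (intro conjI ballI allI impI)
  show "two_sided_ideal (torsion \<alpha> p)" by (rule torsion.two_sided_ideal_axioms)
  show "rel_ideal \<alpha> p \<subseteq> torsion \<alpha> p" by (rule rel_ideal_subset_torsion)
next
  fix a d assume "a \<in> torsion \<alpha> p"
  then obtain f where f: "f \<noteq> 0" "polyH f * a \<in> rel_ideal \<alpha> p" unfolding torsion_def by blast
  have "polyH f * hcomp d a = hcomp d (polyH f * a)" by (simp add: hcomp_polyH_mult)
  also have "\<dots> \<in> rel_ideal \<alpha> p" by (rule rel_ideal_graded[OF f(2)])
  finally show "hcomp d a \<in> torsion \<alpha> p" using f(1) unfolding torsion_def by blast
next
  fix r assume "polyH r \<in> torsion \<alpha> p"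
  then obtain f where "f \<noteq> 0" "polyH (f * r) \<in> rel_ideal \<alpha> p"
    unfolding torsion_def by (auto simp: polyH_mult)
  then have "r = 0" using polyH_in_rel_ideal[OF compat] by fastforce
  then show "polyH r \<in> rel_ideal \<alpha> p" by (simp add: polyH_def rel_ideal.zero_mem)
qed

lemma fa_poly_gH: "fa_poly r gH = coeff_fun (polyH r)"
  by (simp add: fa_gen_eq fa_poly_eq polyH_def)

lemma tgwa_tilde_ideal_eq: "tgwa_tilde_ideal \<alpha> p = coeff_fun ` rel_ideal \<alpha> p"
  by (simp add: tgwa_tilde_ideal_def tgwa_rels_eq genideal_FA_image rel_ideal_def)

lemma kfp_tilde_ideal_eq: "kfp_tilde_ideal \<alpha> p = coeff_fun ` rel_ideal \<alpha> p"
  by (simp add: kfp_tilde_ideal_def kfp_rels_eq genideal_FA_image kfp_relators_span)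

lemma kfp_torsion_eq: "kfp_torsion \<alpha> p = coeff_fun ` torsion \<alpha> p"
  by (auto simp: kfp_torsion_def torsion_def carrier_FA kfp_tilde_ideal_eq fa_poly_gH
      coeff_fun_mult[symmetric])

lemma tgwa_good_ideal_image:
  assumes "two_sided_ideal X"
  shows "tgwa_good_ideal \<alpha> p (coeff_fun ` X) \<longleftrightarrow> admissible \<alpha> p X"
  using ideal_FA_image[OF assms] assms
  by (auto simp: tgwa_good_ideal_def admissible_def tgwa_tilde_ideal_eq coeff_fun_hcomp fa_poly_gH)

lemma kfp_ideal_eq: "kfp_ideal \<alpha> p = coeff_fun ` torsion \<alpha> p"
proof -
  have "kfp_tilde_ideal \<alpha> p \<union> kfp_torsion \<alpha> p = coeff_fun ` torsion \<alpha> p"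
    using rel_ideal_subset_torsion by (fastforce simp: kfp_tilde_ideal_eq kfp_torsion_eq)
  then show ?thesis
    by (simp add: kfp_ideal_def genideal_FA_image ideal_span_of_ideal torsion.two_sided_ideal_axioms)
qed

lemma tgwa_ideal_eq:
  assumes "p I1 \<noteq> 0" and "p I2 \<noteq> 0"
    and compat: "shift (\<alpha> I2 / 2) (p I1) * shift (\<alpha> I1 / 2) (p I2)
         = shift (- \<alpha> I2 / 2) (p I1) * shift (- \<alpha> I1 / 2) (p I2)"
  shows "tgwa_ideal \<alpha> p = coeff_fun ` torsion \<alpha> p"
proof -
  have "J \<subseteq> coeff_fun ` torsion \<alpha> p" if "tgwa_good_ideal \<alpha> p J" for J
  proof -
    have "ideal J FA" using that by (simp add: tgwa_good_ideal_def)
    note J = ideal_FA_preimage[OF this]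
    with that have "admissible \<alpha> p {a. coeff_fun a \<in> J}"
      using tgwa_good_ideal_image by metis
    then have "{a. coeff_fun a \<in> J} \<subseteq> torsion \<alpha> p"
      by (rule admissible_subset_torsion[OF assms(1,2)])
    then show ?thesis using J(2) by blast
  qed
  moreover have "tgwa_good_ideal \<alpha> p (coeff_fun ` torsion \<alpha> p)"
    using tgwa_good_ideal_image[OF torsion.two_sided_ideal_axioms] admissible_torsion[OF compat]
    by blast
  ultimately have "tgwa_tilde_ideal \<alpha> p \<union> \<Union>{J. tgwa_good_ideal \<alpha> p J} = coeff_fun ` torsion \<alpha> p"
    using rel_ideal_subset_torsion by (fastforce simp: tgwa_tilde_ideal_eq)
  then show ?thesis
    by (simp add: tgwa_ideal_def genideal_FA_image ideal_span_of_ideal torsion.two_sided_ideal_axioms)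
qed

theorem mainTheorem7:
  fixes \<alpha> :: "idx \<Rightarrow> complex" and p :: "idx \<Rightarrow> complex poly"
  assumes "p I1 \<noteq> 0" and "p I2 \<noteq> 0"
    and "shift (\<alpha> I2 / 2) (p I1) * shift (\<alpha> I1 / 2) (p I2)
         = shift (- \<alpha> I2 / 2) (p I1) * shift (- \<alpha> I1 / 2) (p I2)"
  shows "\<exists>\<phi>. \<phi> \<in> ring_iso (KFP \<alpha> p) (TGWA \<alpha> p) \<and>
           (\<forall>c. \<phi> (kfp_ideal \<alpha> p +>\<^bsub>free_alg\<^esub> fa_const c) = tgwa_ideal \<alpha> p +>\<^bsub>free_alg\<^esub> fa_const c)"
proof -
  have "kfp_ideal \<alpha> p = tgwa_ideal \<alpha> p"
    using kfp_ideal_eq tgwa_ideal_eq[OF assms] by simp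
  then show ?thesis
    by (intro exI[of _ id]) (simp add: KFP_def TGWA_def ring_iso_set_refl)
qed

end
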